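(* Let $f,g>0$, let $\Omega\subset\mathbb{R}^2$ be a bounded convex domain, let $\mu$ be the Lebesgue measure restricted to $\Omega$, let $\sigma$ be a compactly supported finite positive Borel measure on $\mathbb{R}^2$, and let $\varepsilon>0$. With $K_\varepsilon(X,Y)=e^{-\|X-Y\|^2/(2\varepsilon)}$, consider the problem $$\sup_{\varphi\in\mathcal{C}(\Omega),\,\psi\in\mathcal{C}(\mathbb{R}^2)} \mathcal{D}_{\sigma,\varepsilon}(\varphi,\psi),\qquad \mathcal{D}_{\sigma,\varepsilon}(\varphi,\psi):=\int\psi(Y)\,d\sigma(Y)-\frac{f^2}{2g}\int_\Omega\varphi(X)^2\,d\mu(X)-\varepsilon\iint\Big(e^{(\varphi(X)+\psi(Y))/\varepsilon}K_\varepsilon(X,Y)-1\Big)\,d\mu(X)\,d\sigma(Y).$$ This problem has a unique solution $(\varphi_\varepsilon,\psi_\varepsilon)$, and: (i) it satisfies, for all $Y$ and all $X$, $$\psi_\varepsilon(Y)=-\varepsilon\log\Big(\int_\Omega e^{\varphi_\varepsilon(X)/\varepsilon}K_\varepsilon(X,Y)\,d\mu(X)\Big),\qquad \varphi_\varepsilon(X)=-\varepsilon\,W_0\Big(\frac{g}{\varepsilon f^2}\int e^{\psi_\varepsilon(Y)/\varepsilon}K_\varepsilon(X,Y)\,d\sigma(Y)\Big);$$ (ii) setting $h_\varepsilon:=-\frac{f^2}{g}\varphi_\varepsilon$, the pair $(\varphi_\varepsilon,\psi_\varepsilon)$ attains the supremum defining $\mathrm{OT}_\varepsilon(\sigma,h_\varepsilon\mu)$,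 and $h_\varepsilon$ is a minimiser of $$h\mapsto \mathrm{OT}_\varepsilon(\sigma,h\mu)+\frac{g}{2f^2}\int_\Omega h(X)^2\,d\mu(X)$$ over nonnegative $h\in L^2(\mu)$; (iii) for all $Y$, $$\nabla\psi_\varepsilon(Y)=Y-\int_\Omega X\,e^{(\varphi_\varepsilon(X)+\psi_\varepsilon(Y))/\varepsilon}K_\varepsilon(X,Y)\,d\mu(X).$$
   Context: $W_0$ denotes the principal ($0$-th) branch of the Lambert function, i.e. the inverse of $z\mapsto ze^z$ on $[0,\infty)$. For a nonnegative $h\in L^2(\mu)$, the entropic transport cost is defined by $$\mathrm{OT}_\varepsilon(\sigma,h\mu):=\sup_{\varphi\in\mathcal{C}(\Omega),\,\psi\in\mathcal{C}(\mathbb{R}^2)}\int\psi\,d\sigma+\int_\Omega\varphi\,h\,d\mu-\varepsilon\iint\Big(e^{(\varphi(X)+\psi(Y))/\varepsilon}K_\varepsilon(X,Y)-1\Big)\,d\mu(X)\,d\sigma(Y).$$ *)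

theory Defs
  imports "HOL-Analysis.Analysis"
begin

definition lambert_W0 :: "real \<Rightarrow> real" where
  "lambert_W0 y = (THE w. 0 \<le> w \<and> w * exp w = y)"

definition gauss_kernel :: "real \<Rightarrow> real^2 \<Rightarrow> real^2 \<Rightarrow> real" where
  "gauss_kernel \<epsilon> X Y = exp (- (norm (X - Y))\<^sup>2 / (2 * \<epsilon>))"

text \<open>The dual functional D_{sigma,eps}, with value -\<infinity> whenever one of its integrals
  does not exist as a finite Lebesgue integral (mu = Lebesgue measure on Omega).\<close>
definition dual_obj ::
  "real \<Rightarrow> real \<Rightarrow> (real^2) set \<Rightarrow> (real^2) measure \<Rightarrow> real
     \<Rightarrow> (real^2 \<Rightarrow> real) \<Rightarrow> (real^2 \<Rightarrow> real) \<Rightarrow> ereal" where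
  "dual_obj f g \<Omega> \<sigma> \<epsilon> \<phi> \<psi> =
    (if integrable \<sigma> \<psi>
        \<and> integrable (lebesgue_on \<Omega>) (\<lambda>X. (\<phi> X)\<^sup>2)
        \<and> integrable (lebesgue_on \<Omega> \<Otimes>\<^sub>M \<sigma>)
             (\<lambda>(X, Y). exp ((\<phi> X + \<psi> Y) / \<epsilon>) * gauss_kernel \<epsilon> X Y - 1)
     then ereal ((\<integral>Y. \<psi> Y \<partial>\<sigma>)
            - f\<^sup>2 / (2 * g) * (\<integral>X. (\<phi> X)\<^sup>2 \<partial>lebesgue_on \<Omega>)
            - \<epsilon> * integral\<^sup>L (lebesgue_on \<Omega> \<Otimes>\<^sub>M \<sigma>)
                 (\<lambda>(X, Y). exp ((\<phi> X + \<psi> Y) / \<epsilon>) * gauss_kernel \<epsilon> X Y - 1))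
     else -\<infinity>)"

definition dual_maximizer ::
  "real \<Rightarrow> real \<Rightarrow> (real^2) set \<Rightarrow> (real^2) measure \<Rightarrow> real
     \<Rightarrow> (real^2 \<Rightarrow> real) \<Rightarrow> (real^2 \<Rightarrow> real) \<Rightarrow> bool" where
  "dual_maximizer f g \<Omega> \<sigma> \<epsilon> \<phi> \<psi> \<longleftrightarrow>
     continuous_on \<Omega> \<phi> \<and> continuous_on UNIV \<psi> \<and>
     (\<forall>\<phi>' \<psi>'. continuous_on \<Omega> \<phi>' \<and> continuous_on UNIV \<psi>' \<longrightarrow>
        dual_obj f g \<Omega> \<sigma> \<epsilon> \<phi>' \<psi>' \<le> dual_obj f g \<Omega> \<sigma> \<epsilon> \<phi> \<psi>)"

definition ot_obj ::
  "real \<Rightarrow> (real^2) set \<Rightarrow> (real^2) measure \<Rightarrow> (real^2 \<Rightarrow> real)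
     \<Rightarrow> (real^2 \<Rightarrow> real) \<Rightarrow> (real^2 \<Rightarrow> real) \<Rightarrow> ereal" where
  "ot_obj \<epsilon> \<Omega> \<sigma> h \<phi> \<psi> =
    (if integrable \<sigma> \<psi>
        \<and> integrable (lebesgue_on \<Omega>) (\<lambda>X. \<phi> X * h X)
        \<and> integrable (lebesgue_on \<Omega> \<Otimes>\<^sub>M \<sigma>)
             (\<lambda>(X, Y). exp ((\<phi> X + \<psi> Y) / \<epsilon>) * gauss_kernel \<epsilon> X Y - 1)
     then ereal ((\<integral>Y. \<psi> Y \<partial>\<sigma>)
            + (\<integral>X. \<phi> X * h X \<partial>lebesgue_on \<Omega>)
            - \<epsilon> * integral\<^sup>L (lebesgue_on \<Omega> \<Otimes>\<^sub>M \<sigma>)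
                 (\<lambda>(X, Y). exp ((\<phi> X + \<psi> Y) / \<epsilon>) * gauss_kernel \<epsilon> X Y - 1))
     else -\<infinity>)"

definition entropic_OT ::
  "real \<Rightarrow> (real^2) set \<Rightarrow> (real^2) measure \<Rightarrow> (real^2 \<Rightarrow> real) \<Rightarrow> ereal" where
  "entropic_OT \<epsilon> \<Omega> \<sigma> h =
     (SUP p \<in> {(\<phi>, \<psi>). continuous_on \<Omega> \<phi> \<and> continuous_on UNIV \<psi>}.
        ot_obj \<epsilon> \<Omega> \<sigma> h (fst p) (snd p))"

definition nonneg_L2 :: "(real^2) set \<Rightarrow> (real^2 \<Rightarrow> real) \<Rightarrow> bool" where
  "nonneg_L2 \<Omega> h \<longleftrightarrow> h \<in> borel_measurable (lebesgue_on \<Omega>)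
     \<and> integrable (lebesgue_on \<Omega>) (\<lambda>X. (h X)\<^sup>2)
     \<and> (AE X in lebesgue_on \<Omega>. 0 \<le> h X)"

end

theory Submission
  imports Defs
begin

text \<open>The first-order conditions of the dual functional read
  \<open>\<psi> = -\<epsilon> log \<integral> e\<^bsup>\<phi>/\<epsilon>\<^esup> K\<^sub>\<epsilon> d\<mu>\<close> and \<open>\<phi> = -\<epsilon> W\<^sub>0(\<kappa> \<integral> e\<^bsup>\<psi>/\<epsilon>\<^esup> K\<^sub>\<epsilon> d\<sigma>)\<close> with
  \<open>\<kappa> = g/(\<epsilon> f\<^sup>2)\<close>.  Composing them gives a Sinkhorn-type map on \<open>\<phi>\<close>; on potentials with
  values in \<open>[-M, 0]\<close>, for an explicit \<open>M\<close>, it is a sup-norm contraction with constant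
  \<open>(M/\<epsilon>)/(1 + M/\<epsilon>)\<close>, because \<open>W\<^sub>0\<close> contracts logarithmic distances on
  \<open>[0, (M/\<epsilon>) e\<^bsup>M/\<epsilon>\<^esup>]\<close>; Banach's theorem yields a continuous fixed point.  For it, the plan
  \<open>e\<^bsup>(\<phi>+\<psi>)/\<epsilon>\<^esup> K\<^sub>\<epsilon>\<close> has marginals \<open>h \<mu>\<close> and \<open>\<sigma>\<close> with \<open>h = -(f\<^sup>2/g) \<phi>\<close>.  Hence every
  competitor falls short of \<open>(\<phi>, \<psi>)\<close> by \<open>\<epsilon>\<close> times an integrated Bregman divergence of \<open>exp\<close>,
  plus \<open>f\<^sup>2/(2g) \<parallel>\<phi>' - \<phi>\<parallel>\<^sup>2\<close> for the dual functional.  This gives optimality, uniqueness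
  (almost everywhere, hence on \<open>\<Omega>\<close> by continuity) and the value of \<open>OT\<^sub>\<epsilon>(\<sigma>, h\<mu>)\<close>;
  completing the square in \<open>h\<close> gives the minimality of \<open>h\<close>.\<close>

section \<open>The principal branch of the Lambert function\<close>

lemma mult_exp_strict_mono:
  fixes a b :: real
  assumes "0 \<le> a" "a < b"
  shows "a * exp a < b * exp b"
proof -
  have "a * exp a \<le> a * exp b"
    using assms by (intro mult_left_mono) auto
  also have "\<dots> < b * exp b"
    using assms by (intro mult_strict_right_mono) auto
  finally show ?thesis .
qed

lemma mult_exp_diff_ge:
  fixes a b :: real
  assumes "0 \<le> a" "a \<le> b"
  shows "b - a \<le> b * exp b - a * exp a"
proof -
  have "a * exp a \<le> a * exp b"
    using assms by (intro mult_left_mono) auto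
  moreover have "(b - a) * 1 \<le> (b - a) * exp b"
    using assms by (intro mult_left_mono) auto
  ultimately show ?thesis
    by (simp add: algebra_simps)
qed

lemma ex1_mult_exp_eq:
  fixes y :: real
  assumes "0 \<le> y"
  shows "\<exists>!w. 0 \<le> w \<and> w * exp w = y"
proof -
  have "\<exists>w\<ge>0. w \<le> y \<and> w * exp w = y"
    using assms by (intro IVT') (auto simp: mult_le_cancel_left1 intro!: continuous_intros)
  then obtain w where w: "0 \<le> w" "w * exp w = y"
    by auto
  have "v = w" if "0 \<le> v" "v * exp v = y" for v
    using mult_exp_strict_mono[of v w] mult_exp_strict_mono[of w v] that w
    by (cases v w rule: linorder_cases) auto
  with w show ?thesis
    by blast
qed

lemma lambert_W0:
  fixes y :: real
  assumes "0 \<le> y"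
  shows lambert_W0_nonneg: "0 \<le> lambert_W0 y"
    and lambert_W0_mult_exp: "lambert_W0 y * exp (lambert_W0 y) = y"
  using theI'[OF ex1_mult_exp_eq[OF assms]] unfolding lambert_W0_def by auto

lemma lambert_W0_mult_exp_eq:
  fixes w :: real
  assumes "0 \<le> w"
  shows "lambert_W0 (w * exp w) = w"
  using ex1_mult_exp_eq[of "w * exp w"] lambert_W0[of "w * exp w"] assms by auto

lemma lambert_W0_mono:
  fixes a b :: real
  assumes "0 \<le> a" "a \<le> b"
  shows "lambert_W0 a \<le> lambert_W0 b"
  using mult_exp_strict_mono[of "lambert_W0 b" "lambert_W0 a"]
    lambert_W0[of a] lambert_W0[of b] assms by force

lemma lambert_W0_le:
  fixes y m :: real
  assumes "0 \<le> y" "0 \<le> m" "y \<le> m * exp m"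
  shows "lambert_W0 y \<le> m"
  using lambert_W0_mono[OF assms(1,3)] lambert_W0_mult_exp_eq[OF assms(2)] by simp

lemma lambert_W0_lipschitz: "1-lipschitz_on {0..} lambert_W0"
proof (rule lipschitz_onI)
  have le: "lambert_W0 b - lambert_W0 a \<le> b - a" if "0 \<le> a" "a \<le> b" for a b :: real
    using mult_exp_diff_ge[OF lambert_W0_nonneg[of a] lambert_W0_mono[OF that]]
      lambert_W0_mult_exp[of a] lambert_W0_mult_exp[of b] that by auto
  fix a b :: real
  assume "a \<in> {0..}" "b \<in> {0..}"
  then show "dist (lambert_W0 a) (lambert_W0 b) \<le> 1 * dist a b"
    using le[of a b] le[of b a] lambert_W0_mono[of a b] lambert_W0_mono[of b a]
    by (cases "a \<le> b") (auto simp: dist_real_def)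
qed simp

lemma continuous_on_lambert_W0: "continuous_on {0..} lambert_W0"
  using lambert_W0_lipschitz by (rule lipschitz_on_continuous_on)

lemma mult_exp_log_contraction:
  fixes w1 w2 s :: real
  assumes "0 < w2" "w2 < w1" "w1 * exp w1 \<le> exp s * (w2 * exp w2)"
  shows "w1 - w2 \<le> s * (w1 / (1 + w1))"
proof -
  have "ln w1 + w1 \<le> s + (ln w2 + w2)"
    using assms ln_le_cancel_iff[of "w1 * exp w1" "exp s * (w2 * exp w2)"]
    by (simp add: ln_mult)
  moreover have "(w1 - w2) / w1 \<le> ln (w1 / w2)"
    using ln_le_minus_one[of "w2 / w1"] assms by (simp add: ln_div diff_divide_distrib)
  ultimately have "(w1 - w2) * (1 + 1 / w1) \<le> s"
    using assms by (simp add: ln_div algebra_simps)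
  then show ?thesis
    using assms by (simp add: field_simps)
qed

text \<open>On \<open>[0, m e\<^sup>m]\<close> the Lambert function contracts the multiplicative distance
  \<open>|ln y\<^sub>1 - ln y\<^sub>2|\<close> by the factor \<open>m / (1 + m)\<close>.\<close>

lemma lambert_W0_diff_le:
  fixes y1 y2 s m :: real
  assumes "0 \<le> y1" "0 \<le> y2" "0 \<le> s" "y1 \<le> exp s * y2" "lambert_W0 y1 \<le> m"
  shows "lambert_W0 y1 - lambert_W0 y2 \<le> s * (m / (1 + m))"
proof -
  define w1 w2 where "w1 = lambert_W0 y1" and "w2 = lambert_W0 y2"
  have w1: "0 \<le> w1" "w1 * exp w1 = y1" and w2: "0 \<le> w2" "w2 * exp w2 = y2"
    using lambert_W0 assms unfolding w1_def w2_def by auto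
  have "0 \<le> m"
    using w1 assms unfolding w1_def by linarith
  show ?thesis
  proof (cases "w1 \<le> w2")
    case True
    then show ?thesis
      using \<open>0 \<le> m\<close> assms unfolding w1_def w2_def by (smt (verit) divide_nonneg_nonneg mult_nonneg_nonneg)
  next
    case False
    have "w2 \<noteq> 0"
    proof
      assume "w2 = 0"
      then have "w1 * exp w1 \<le> 0"
        using w1 w2 assms by simp
      with False w2 show False
        by (simp add: mult_le_0_iff)
    qed
    then have "w1 - w2 \<le> s * (w1 / (1 + w1))"
      using w1 w2 False assms by (intro mult_exp_log_contraction) auto
    also have "\<dots> \<le> s * (m / (1 + m))"
      using assms w1 \<open>0 \<le> m\<close> unfolding w1_def by (intro mult_left_mono) (auto simp: field_simps)
    finally show ?thesis
      unfolding w1_def w2_def .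
  qed
qed

section \<open>The Gaussian kernel\<close>

lemma abs_exp_minus_one_minus_le:
  fixes t :: real
  assumes "\<bar>t\<bar> \<le> 1"
  shows "\<bar>exp t - 1 - t\<bar> \<le> t\<^sup>2"
proof -
  have "exp t - 1 - t \<le> t\<^sup>2"
  proof (cases "t \<ge> 0")
    case True
    then show ?thesis
      using exp_bound[of t] assms by simp
  next
    case False
    have "exp t * (1 - t) \<le> 1"
      using exp_ge_add_one_self[of "- t"] by (simp add: exp_minus field_simps)
    also have "1 \<le> (1 + t + t\<^sup>2) * (1 - t)"
      using False assms mult_nonpos_nonneg[of t "t * t"]
      by (simp add: algebra_simps power2_eq_square power3_eq_cube)
    finally have "exp t \<le> 1 + t + t\<^sup>2"
      using False by (simp add: mult_le_cancel_right_pos)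
    then show ?thesis
      by simp
  qed
  moreover have "0 \<le> exp t - 1 - t"
    using exp_ge_add_one_self[of t] by linarith
  ultimately show ?thesis
    by simp
qed

lemma gauss_kernel_pos: "0 < gauss_kernel \<epsilon> X Y"
  by (simp add: gauss_kernel_def)

lemma gauss_kernel_le_1: "0 < \<epsilon> \<Longrightarrow> gauss_kernel \<epsilon> X Y \<le> 1"
  by (simp add: gauss_kernel_def)

lemma gauss_kernel_commute: "gauss_kernel \<epsilon> X Y = gauss_kernel \<epsilon> Y X"
  by (simp add: gauss_kernel_def norm_minus_commute)

lemma gauss_kernel_translate:
  "gauss_kernel \<epsilon> X (Y + h) =
     gauss_kernel \<epsilon> X Y * exp ((2 * ((X - Y) \<bullet> h) - (norm h)\<^sup>2) / (2 * \<epsilon>))"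
proof -
  have "(norm (X - (Y + h)))\<^sup>2 = (norm (X - Y))\<^sup>2 - 2 * ((X - Y) \<bullet> h) + (norm h)\<^sup>2"
    by (simp add: power2_norm_eq_inner algebra_simps inner_commute)
  then show ?thesis
    unfolding gauss_kernel_def by (simp add: exp_add[symmetric] diff_divide_distrib add_divide_distrib)
qed

lemma gauss_kernel_lower_bound:
  assumes "0 < \<epsilon>" "norm X \<le> R" "norm Y \<le> R"
  shows "exp (- (2 * R)\<^sup>2 / (2 * \<epsilon>)) \<le> gauss_kernel \<epsilon> X Y"
proof -
  have "norm (X - Y) \<le> 2 * R"
    using norm_triangle_ineq4[of X Y] assms by linarith
  then have "(norm (X - Y))\<^sup>2 / (2 * \<epsilon>) \<le> (2 * R)\<^sup>2 / (2 * \<epsilon>)"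
    using assms by (intro divide_right_mono power_mono) auto
  then show ?thesis
    unfolding gauss_kernel_def by (metis exp_le_cancel_iff minus_divide_left neg_le_iff_le)
qed

lemma gauss_kernel_taylor:
  assumes "0 < \<epsilon>" "norm X \<le> R"
    and c_def: "c = (2 * (R + norm Y) + 1) / (2 * \<epsilon>)"
    and "norm h \<le> 1" and hc: "norm h * c \<le> 1"
  shows "\<bar>gauss_kernel \<epsilon> X (Y + h) - gauss_kernel \<epsilon> X Y
           - gauss_kernel \<epsilon> X Y * ((X - Y) \<bullet> h) / \<epsilon>\<bar>
         \<le> (c\<^sup>2 + 1 / (2 * \<epsilon>)) * (norm h)\<^sup>2"
proof -
  define K where "K = gauss_kernel \<epsilon> X Y"
  define t where "t = (2 * ((X - Y) \<bullet> h) - (norm h)\<^sup>2) / (2 * \<epsilon>)"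
  have K: "0 < K" "K \<le> 1"
    unfolding K_def using gauss_kernel_pos gauss_kernel_le_1 assms by auto
  have "\<bar>(X - Y) \<bullet> h\<bar> \<le> norm (X - Y) * norm h"
    by (rule Cauchy_Schwarz_ineq2)
  also have "\<dots> \<le> (R + norm Y) * norm h"
    using norm_triangle_ineq4[of X Y] assms by (intro mult_right_mono) auto
  finally have "\<bar>(X - Y) \<bullet> h\<bar> \<le> (R + norm Y) * norm h" .
  moreover have "(norm h)\<^sup>2 \<le> norm h"
    using assms by (simp add: power2_eq_square mult_left_le)
  ultimately have "\<bar>2 * ((X - Y) \<bullet> h) - (norm h)\<^sup>2\<bar> \<le> 2 * ((R + norm Y) * norm h) + norm h"
    using zero_le_power2[of "norm h"] unfolding abs_le_iff by linarith
  also have "\<dots> = (2 * (R + norm Y) + 1) * norm h"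
    by (simp add: algebra_simps)
  finally have "\<bar>2 * ((X - Y) \<bullet> h) - (norm h)\<^sup>2\<bar> \<le> (2 * (R + norm Y) + 1) * norm h" .
  then have t: "\<bar>t\<bar> \<le> c * norm h"
    unfolding t_def c_def using assms by (simp add: field_simps)
  then have "\<bar>t\<bar> \<le> 1"
    using hc by (simp add: mult.commute)
  have "t\<^sup>2 \<le> (c * norm h)\<^sup>2"
    using t power_mono[of "\<bar>t\<bar>" "c * norm h" 2] by simp
  have "gauss_kernel \<epsilon> X (Y + h) - K - K * ((X - Y) \<bullet> h) / \<epsilon>
      = K * (exp t - 1 - t) - K * ((norm h)\<^sup>2 / (2 * \<epsilon>))"
    unfolding gauss_kernel_translate K_def[symmetric] t_def using assms by (simp add: field_simps)
  also have "\<bar>\<dots>\<bar> \<le> \<bar>K * (exp t - 1 - t)\<bar> + \<bar>K * ((norm h)\<^sup>2 / (2 * \<epsilon>))\<bar>"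
    by (rule abs_triangle_ineq4)
  also have "\<bar>K * (exp t - 1 - t)\<bar> \<le> 1 * t\<^sup>2"
    unfolding abs_mult using K abs_exp_minus_one_minus_le[OF \<open>\<bar>t\<bar> \<le> 1\<close>] by (intro mult_mono) auto
  also have "\<bar>K * ((norm h)\<^sup>2 / (2 * \<epsilon>))\<bar> \<le> 1 * ((norm h)\<^sup>2 / (2 * \<epsilon>))"
    unfolding abs_mult using K assms by (intro mult_mono) auto
  finally show ?thesis
    using \<open>t\<^sup>2 \<le> (c * norm h)\<^sup>2\<close> unfolding K_def by (simp add: algebra_simps power_mult_distrib)
qed

lemma has_derivative_at_quadratic_remainder:
  fixes F :: "'a::real_normed_vector \<Rightarrow> 'b::real_normed_vector"
  assumes "bounded_linear L" "0 < d"
    and "\<And>h. norm h < d \<Longrightarrow> norm (F (x + h) - F x - L h) \<le> K * (norm h)\<^sup>2"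
  shows "(F has_derivative L) (at x)"
  unfolding has_derivative_at
proof (intro conjI \<open>bounded_linear L\<close>)
  have "\<forall>\<^sub>F h in at 0. norm h < d \<and> h \<noteq> 0"
    using \<open>0 < d\<close> by (auto simp: eventually_at intro!: exI[of _ d])
  then have "\<forall>\<^sub>F h in at 0. norm (norm (F (x + h) - F x - L h) / norm h) \<le> K * norm h"
  proof eventually_elim
    case (elim h)
    then have "norm (F (x + h) - F x - L h) / norm h \<le> K * (norm h)\<^sup>2 / norm h"
      using assms(3) by (simp add: divide_right_mono)
    then show ?case
      using elim by (simp add: power2_eq_square)
  qed
  moreover have "((\<lambda>h. K * norm h) \<longlongrightarrow> 0) (at 0)"
    by (intro tendsto_mult_right_zero tendsto_norm_zero tendsto_ident_at)
  ultimately show "((\<lambda>h. norm (F (x + h) - F x - L h) / norm h) \<longlongrightarrow> 0) (at 0)"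
    by (rule Lim_null_comparison)
qed

lemma measurable_gauss_kernel [measurable]:
  fixes M :: "(real^2) measure"
  assumes "(\<lambda>x. x) \<in> borel_measurable M"
  shows "(\<lambda>X. gauss_kernel \<epsilon> X Y) \<in> borel_measurable M"
    and "(\<lambda>X. gauss_kernel \<epsilon> Y X) \<in> borel_measurable M"
  unfolding gauss_kernel_def by (intro measurable_compose[OF assms]; measurable)+

lemma integrable_gauss_kernel_weighted:
  fixes M :: "(real^2) measure"
  assumes "finite_measure M" "0 < \<epsilon>" "(\<lambda>x. x) \<in> borel_measurable M" "w \<in> borel_measurable M"
    and "AE X in M. \<bar>w X\<bar> \<le> B"
  shows "integrable M (\<lambda>X. w X * gauss_kernel \<epsilon> X Y)"
proof (rule finite_measure.integrable_const_bound[OF assms(1), where B = B])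
  show "AE X in M. norm (w X * gauss_kernel \<epsilon> X Y) \<le> B"
    using assms(5)
  proof eventually_elim
    case (elim X)
    have "\<bar>w X\<bar> * gauss_kernel \<epsilon> X Y \<le> B * 1"
      using elim gauss_kernel_pos[of \<epsilon> X Y] gauss_kernel_le_1[OF assms(2), of X Y]
      by (intro mult_mono) auto
    then show ?case
      using gauss_kernel_pos[of \<epsilon> X Y] by (simp add: abs_mult)
  qed
qed (use assms in measurable)

lemma integrable_gauss_kernel_gradient:
  fixes M :: "(real^2) measure" and w :: "real^2 \<Rightarrow> real"
  assumes "finite_measure M" "0 < \<epsilon>" and id_meas: "(\<lambda>x. x) \<in> borel_measurable M"
    and [measurable]: "w \<in> borel_measurable M"
    and bounds: "AE X in M. norm X \<le> R \<and> \<bar>w X\<bar> \<le> B"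
  shows "integrable M (\<lambda>X. (w X * gauss_kernel \<epsilon> X Y / \<epsilon>) *\<^sub>R (X - Y))"
proof (rule finite_measure.integrable_const_bound[OF assms(1), where B = "B / \<epsilon> * (R + norm Y)"])
  show "AE X in M. norm ((w X * gauss_kernel \<epsilon> X Y / \<epsilon>) *\<^sub>R (X - Y)) \<le> B / \<epsilon> * (R + norm Y)"
    using bounds
  proof eventually_elim
    case (elim X)
    have "\<bar>w X\<bar> * gauss_kernel \<epsilon> X Y \<le> B * 1"
      using elim gauss_kernel_pos[of \<epsilon> X Y] gauss_kernel_le_1[OF assms(2), of X Y]
      by (intro mult_mono) auto
    moreover have "norm (X - Y) \<le> R + norm Y"
      using norm_triangle_ineq4[of X Y] elim by linarith
    moreover have "0 \<le> B"
      using elim by (meson abs_ge_zero order_trans)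
    ultimately have "\<bar>w X\<bar> * gauss_kernel \<epsilon> X Y / \<epsilon> * norm (X - Y) \<le> B / \<epsilon> * (R + norm Y)"
      using assms(2) by (intro mult_mono divide_right_mono) auto
    then show ?case
      using gauss_kernel_pos[of \<epsilon> X Y] assms(2) by (simp add: abs_mult)
  qed
  show "(\<lambda>X. (w X * gauss_kernel \<epsilon> X Y / \<epsilon>) *\<^sub>R (X - Y)) \<in> borel_measurable M"
    using id_meas measurable_gauss_kernel(1)[OF id_meas] by measurable
qed

lemma gauss_kernel_integral_remainder:
  fixes M :: "(real^2) measure" and w :: "real^2 \<Rightarrow> real"
  assumes "finite_measure M" "0 < \<epsilon>" and id_meas: "(\<lambda>x. x) \<in> borel_measurable M"
    and [measurable]: "w \<in> borel_measurable M"
    and bounds: "AE X in M. norm X \<le> R \<and> \<bar>w X\<bar> \<le> B"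
    and c_def: "c = (2 * (R + norm Y) + 1) / (2 * \<epsilon>)" and "norm h \<le> 1" "norm h * c \<le> 1"
  defines "D \<equiv> \<integral>X. (w X * gauss_kernel \<epsilon> X Y / \<epsilon>) *\<^sub>R (X - Y) \<partial>M"
  shows "norm ((\<integral>X. w X * gauss_kernel \<epsilon> X (Y + h) \<partial>M) - (\<integral>X. w X * gauss_kernel \<epsilon> X Y \<partial>M) - D \<bullet> h)
    \<le> measure M (space M) * B * (c\<^sup>2 + 1 / (2 * \<epsilon>)) * (norm h)\<^sup>2"
proof -
  interpret finite_measure M by fact
  note [measurable] = id_meas measurable_gauss_kernel[OF id_meas]
  have int_wK: "integrable M (\<lambda>X. w X * gauss_kernel \<epsilon> X Z)" for Z
    using bounds by (intro integrable_gauss_kernel_weighted[OF assms(1,2) id_meas, where B = B])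
      (auto elim: eventually_mono)
  note int_grad = integrable_gauss_kernel_gradient[OF assms(1-5), of Y]
  define rem where "rem X = gauss_kernel \<epsilon> X (Y + h) - gauss_kernel \<epsilon> X Y
    - gauss_kernel \<epsilon> X Y * ((X - Y) \<bullet> h) / \<epsilon>" for X
  define lin where "lin X = w X * gauss_kernel \<epsilon> X Y * ((X - Y) \<bullet> h) / \<epsilon>" for X
  have int_lin: "integrable M lin"
    using integrable_inner_left[OF int_grad, of h] unfolding lin_def by simp
  have "D \<bullet> h = integral\<^sup>L M lin"
    unfolding D_def lin_def using integral_inner_left[OF int_grad, of h] by simp
  moreover have w_rem: "w X * rem X = w X * gauss_kernel \<epsilon> X (Y + h) - w X * gauss_kernel \<epsilon> X Y - lin X"
    for X
    unfolding rem_def lin_def by (simp add: algebra_simps)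
  ultimately have "(\<integral>X. w X * gauss_kernel \<epsilon> X (Y + h) \<partial>M) - (\<integral>X. w X * gauss_kernel \<epsilon> X Y \<partial>M) - D \<bullet> h
      = (\<integral>X. w X * rem X \<partial>M)"
    unfolding w_rem
    using Bochner_Integration.integral_diff[OF Bochner_Integration.integrable_diff[OF int_wK int_wK] int_lin]
      Bochner_Integration.integral_diff[OF int_wK int_wK] by simp
  moreover have int_rem: "integrable M (\<lambda>X. w X * rem X)"
    unfolding w_rem by (intro Bochner_Integration.integrable_diff int_wK int_lin)
  ultimately have "norm ((\<integral>X. w X * gauss_kernel \<epsilon> X (Y + h) \<partial>M)
      - (\<integral>X. w X * gauss_kernel \<epsilon> X Y \<partial>M) - D \<bullet> h) = norm (\<integral>X. w X * rem X \<partial>M)"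
    by simp
  also have "\<dots> \<le> (\<integral>X. norm (w X * rem X) \<partial>M)"
    by (rule integral_norm_bound)
  also have "\<dots> \<le> (\<integral>X. B * (c\<^sup>2 + 1 / (2 * \<epsilon>)) * (norm h)\<^sup>2 \<partial>M)"
  proof (rule integral_mono_AE)
    show "AE X in M. norm (w X * rem X) \<le> B * (c\<^sup>2 + 1 / (2 * \<epsilon>)) * (norm h)\<^sup>2"
      using bounds
    proof eventually_elim
      case (elim X)
      have "\<bar>rem X\<bar> \<le> (c\<^sup>2 + 1 / (2 * \<epsilon>)) * (norm h)\<^sup>2"
        unfolding rem_def using elim assms(7,8) by (intro gauss_kernel_taylor[OF assms(2) _ c_def]) auto
      then have "\<bar>w X\<bar> * \<bar>rem X\<bar> \<le> B * ((c\<^sup>2 + 1 / (2 * \<epsilon>)) * (norm h)\<^sup>2)"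
        using elim by (intro mult_mono) auto
      then show ?case
        by (simp add: abs_mult mult.assoc)
    qed
  qed (use int_rem in auto)
  also have "\<dots> = measure M (space M) * B * (c\<^sup>2 + 1 / (2 * \<epsilon>)) * (norm h)\<^sup>2"
    by (simp add: mult.assoc)
  finally show ?thesis .
qed

lemma has_derivative_gauss_kernel_integral:
  fixes M :: "(real^2) measure" and w :: "real^2 \<Rightarrow> real"
  assumes "finite_measure M" "0 < \<epsilon>" "(\<lambda>x. x) \<in> borel_measurable M" "w \<in> borel_measurable M"
    and "0 \<le> R" "AE X in M. norm X \<le> R \<and> \<bar>w X\<bar> \<le> B"
  shows "((\<lambda>Y. \<integral>X. w X * gauss_kernel \<epsilon> X Y \<partial>M) has_derivative
           (\<lambda>v. (\<integral>X. (w X * gauss_kernel \<epsilon> X Y / \<epsilon>) *\<^sub>R (X - Y) \<partial>M) \<bullet> v)) (at Y)"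
proof -
  define c where "c = (2 * (R + norm Y) + 1) / (2 * \<epsilon>)"
  have "0 \<le> c"
    unfolding c_def using assms by simp
  show ?thesis
  proof (rule has_derivative_at_quadratic_remainder)
    show "0 < min 1 (1 / (c + 1))"
      using \<open>0 \<le> c\<close> by simp
    fix h :: "real^2"
    assume h: "norm h < min 1 (1 / (c + 1))"
    have "norm h * (c + 1) < 1"
      using h \<open>0 \<le> c\<close> by (simp add: pos_less_divide_eq)
    then have "norm h * c \<le> 1"
      using norm_ge_zero[of h] unfolding distrib_left by linarith
    then show "norm ((\<integral>X. w X * gauss_kernel \<epsilon> X (Y + h) \<partial>M) - (\<integral>X. w X * gauss_kernel \<epsilon> X Y \<partial>M)
        - (\<integral>X. (w X * gauss_kernel \<epsilon> X Y / \<epsilon>) *\<^sub>R (X - Y) \<partial>M) \<bullet> h)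
      \<le> measure M (space M) * B * (c\<^sup>2 + 1 / (2 * \<epsilon>)) * (norm h)\<^sup>2"
      using h by (intro gauss_kernel_integral_remainder[OF assms(1-4,6) c_def]) auto
  qed (rule bounded_linear_inner_right)
qed

lemma continuous_on_AE_eq_imp_eq:
  fixes f g :: "'a::euclidean_space \<Rightarrow> real"
  assumes "open S" "continuous_on S f" "continuous_on S g" "AE x in lebesgue_on S. f x = g x"
    and "x \<in> S"
  shows "f x = g x"
proof (rule ccontr)
  assume "f x \<noteq> g x"
  define U where "U = S \<inter> (\<lambda>y. f y - g y) -` (- {0})"
  have "open U"
    unfolding U_def using assms by (intro continuous_open_preimage continuous_intros) auto
  moreover have "x \<in> U"
    unfolding U_def using \<open>f x \<noteq> g x\<close> \<open>x \<in> S\<close> by auto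
  ultimately obtain r where "0 < r" "ball x r \<subseteq> U"
    using open_contains_ball by blast
  have U_sets: "U \<in> sets lebesgue" "S \<in> sets lebesgue"
    using \<open>open U\<close> \<open>open S\<close> by (simp_all add: borel_open sets_completionI_sets)
  have "{y \<in> space (lebesgue_on S). f y \<noteq> g y} = U"
    unfolding U_def by auto
  then have "emeasure (lebesgue_on S) U = 0"
    using AE_iff_measurable[of U "lebesgue_on S" "\<lambda>y. f y = g y"] assms(4) U_sets
    by (simp add: sets_restrict_space_iff U_def)
  then have "emeasure lebesgue U = 0"
    using U_sets by (simp add: emeasure_restrict_space U_def)
  then have "emeasure lebesgue (ball x r) = 0"
    using \<open>ball x r \<subseteq> U\<close> U_sets emeasure_mono[of "ball x r" U lebesgue] by simp
  moreover have "0 < emeasure lebesgue (ball x r)"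
    using \<open>0 < r\<close> content_ball_pos[of r x] by (simp add: emeasure_eq_measure2)
  ultimately show False
    by simp
qed

lemma integrable_mult_bounded:
  fixes u v :: "'a \<Rightarrow> real"
  assumes "integrable M u" "v \<in> borel_measurable M" "AE x in M. \<bar>v x\<bar> \<le> B"
  shows "integrable M (\<lambda>x. u x * v x)"
proof (rule Bochner_Integration.integrable_bound[OF integrable_mult_right[OF integrable_abs[OF assms(1)]]])
  show "(\<lambda>x. u x * v x) \<in> borel_measurable M"
    using assms(1,2) by measurable
  show "AE x in M. norm (u x * v x) \<le> norm (B * \<bar>u x\<bar>)"
    using assms(3)
  proof eventually_elim
    case (elim x)
    then show ?case
      using mult_left_mono[OF elim abs_ge_zero[of "u x"]] by (simp add: abs_mult mult.commute)
  qed
qed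

lemma integrable_comp_snd:
  fixes u :: "'b \<Rightarrow> real"
  assumes "finite_measure M" "sigma_finite_measure N" "integrable N u"
  shows "integrable (M \<Otimes>\<^sub>M N) (\<lambda>z. u (snd z))"
proof -
  interpret M: finite_measure M by fact
  interpret pair_sigma_finite M N
    using assms unfolding pair_sigma_finite_def by (auto intro: M.sigma_finite_measure_axioms)
  have [measurable]: "u \<in> borel_measurable N"
    using assms(3) by simp
  show ?thesis
    using assms(3) by (intro Fubini_integrable) auto
qed

lemma AE_norm_le_of_compact_support:
  fixes \<sigma> :: "'a::real_normed_vector measure" and C \<Omega> :: "'a set"
  assumes "sets \<sigma> = sets borel" "compact C" "emeasure \<sigma> (UNIV - C) = 0" "bounded \<Omega>"
  obtains R where "\<Omega> \<subseteq> cball 0 R" "AE Y in \<sigma>. norm Y \<le> R"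
proof -
  have "bounded (\<Omega> \<union> C)"
    using assms(2,4) compact_imp_bounded by auto
  then obtain R where R: "\<forall>x\<in>\<Omega> \<union> C. norm x \<le> R"
    unfolding bounded_iff by blast
  have "UNIV - C \<in> sets \<sigma>"
    using assms(1) compact_imp_closed[OF assms(2)] by (simp add: borel_open open_Diff)
  then have "AE Y in \<sigma>. norm Y \<le> R"
    using assms(3) R by (intro AE_I'[of "UNIV - C"]) auto
  moreover have "\<Omega> \<subseteq> cball 0 R"
    using R by auto
  ultimately show ?thesis
    using that by blast
qed

section \<open>The Sinkhorn map and its fixed point\<close>

locale gaussian_entropic_dual =
  fixes f g \<epsilon> :: real and \<Omega> :: "(real^2) set" and \<sigma> :: "(real^2) measure" and R :: real
  assumes f_pos: "0 < f" and g_pos: "0 < g" and \<epsilon>_pos: "0 < \<epsilon>"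
    and open_\<Omega>: "open \<Omega>" and \<Omega>_nonempty: "\<Omega> \<noteq> {}" and \<Omega>_subset_cball: "\<Omega> \<subseteq> cball 0 R"
    and sets_\<sigma>: "sets \<sigma> = sets borel" and finite_\<sigma>: "finite_measure \<sigma>"
    and AE_\<sigma>_norm_le: "AE Y in \<sigma>. norm Y \<le> R"
begin

abbreviation \<mu> :: "(real^2) measure" where "\<mu> \<equiv> lebesgue_on \<Omega>"

lemma \<Omega>_lmeasurable: "\<Omega> \<in> lmeasurable"
  using bounded_subset[OF bounded_cball \<Omega>_subset_cball] open_\<Omega> by (rule lmeasurable_open)

lemma sets_lebesgue_\<Omega>: "\<Omega> \<in> sets lebesgue"
  using \<Omega>_lmeasurable by (simp add: fmeasurableD)

lemma finite_\<mu>: "finite_measure \<mu>"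
  using \<Omega>_lmeasurable by (rule finite_measure_lebesgue_on)

lemma measurable_id_\<mu>: "(\<lambda>x. x) \<in> borel_measurable \<mu>"
  using continuous_imp_measurable_on_sets_lebesgue[OF continuous_on_id sets_lebesgue_\<Omega>]
  by (simp add: id_def)

lemma measurable_id_\<sigma>: "(\<lambda>x. x) \<in> borel_measurable \<sigma>"
  using measurable_ident_sets[OF sets_\<sigma>] by (simp add: id_def)

lemmas measurable_gauss_kernel_\<mu> [measurable] = measurable_gauss_kernel[OF measurable_id_\<mu>]
lemmas measurable_gauss_kernel_\<sigma> [measurable] = measurable_gauss_kernel[OF measurable_id_\<sigma>]

lemma continuous_imp_measurable_\<mu>: "continuous_on \<Omega> \<phi> \<Longrightarrow> \<phi> \<in> borel_measurable \<mu>"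
  by (erule continuous_imp_measurable_on_sets_lebesgue[OF _ sets_lebesgue_\<Omega>])

lemma continuous_imp_measurable_\<sigma>: "continuous_on UNIV \<psi> \<Longrightarrow> \<psi> \<in> borel_measurable \<sigma>"
  using measurable_cong_sets[OF sets_\<sigma> refl] borel_measurable_continuous_onI by blast

lemma R_nonneg: "0 \<le> R"
  using \<Omega>_nonempty \<Omega>_subset_cball by (auto intro: order_trans[OF norm_ge_zero])

lemma measure_\<Omega>_pos: "0 < measure \<mu> \<Omega>"
proof -
  obtain x r where "0 < r" "ball x r \<subseteq> \<Omega>"
    using \<Omega>_nonempty open_\<Omega> open_contains_ball by blast
  then have "0 < measure lebesgue (ball x r)"
    by (simp add: content_ball_pos)
  also have "\<dots> \<le> measure lebesgue \<Omega>"
    using \<open>ball x r \<subseteq> \<Omega>\<close> \<Omega>_lmeasurable by (intro measure_mono_fmeasurable) auto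
  also have "\<dots> = measure \<mu> \<Omega>"
    using sets_lebesgue_\<Omega> by (simp add: measure_restrict_space)
  finally show ?thesis .
qed

definition \<kappa> :: real where
  "\<kappa> = g / (\<epsilon> * f\<^sup>2)"

lemma \<kappa>_pos: "0 < \<kappa>"
  unfolding \<kappa>_def using f_pos g_pos \<epsilon>_pos by simp

definition mu_conv :: "(real^2 \<Rightarrow> real) \<Rightarrow> real^2 \<Rightarrow> real" where
  "mu_conv \<phi> Y = (\<integral>X. exp (\<phi> X / \<epsilon>) * gauss_kernel \<epsilon> X Y \<partial>\<mu>)"

definition sigma_conv :: "(real^2 \<Rightarrow> real) \<Rightarrow> real^2 \<Rightarrow> real" where
  "sigma_conv \<psi> X = (\<integral>Y. exp (\<psi> Y / \<epsilon>) * gauss_kernel \<epsilon> X Y \<partial>\<sigma>)"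

definition psi_transform :: "(real^2 \<Rightarrow> real) \<Rightarrow> real^2 \<Rightarrow> real" where
  "psi_transform \<phi> Y = - \<epsilon> * ln (mu_conv \<phi> Y)"

text \<open>The stationarity condition \<open>(f\<^sup>2/g) \<phi> + e\<^bsup>\<phi>/\<epsilon>\<^esup> sigma_conv \<psi> = 0\<close> of the dual
  functional in \<open>\<phi>\<close>, solved by \<open>w = -\<phi>/\<epsilon>\<close>, \<open>w e\<^sup>w = \<kappa> sigma_conv \<psi>\<close>.\<close>

definition phi_transform :: "(real^2 \<Rightarrow> real) \<Rightarrow> real^2 \<Rightarrow> real" where
  "phi_transform \<psi> X = - \<epsilon> * lambert_W0 (\<kappa> * sigma_conv \<psi> X)"

definition sinkhorn_map :: "(real^2 \<Rightarrow> real) \<Rightarrow> real^2 \<Rightarrow> real" where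
  "sinkhorn_map \<phi> = phi_transform (psi_transform \<phi>)"

definition bounded_potential :: "real \<Rightarrow> (real^2 \<Rightarrow> real) \<Rightarrow> bool" where
  "bounded_potential L \<phi> \<longleftrightarrow> \<phi> \<in> borel_measurable \<mu> \<and> (\<forall>X\<in>\<Omega>. \<bar>\<phi> X\<bar> \<le> L)"

lemma exp_bounded_potential:
  assumes "bounded_potential L \<phi>" "X \<in> \<Omega>"
  shows "exp (- L / \<epsilon>) \<le> exp (\<phi> X / \<epsilon>)" "exp (\<phi> X / \<epsilon>) \<le> exp (L / \<epsilon>)"
proof -
  have "- L \<le> \<phi> X" "\<phi> X \<le> L"
    using assms unfolding bounded_potential_def by (auto simp: abs_le_iff)
  then show "exp (- L / \<epsilon>) \<le> exp (\<phi> X / \<epsilon>)" "exp (\<phi> X / \<epsilon>) \<le> exp (L / \<epsilon>)"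
    using divide_right_mono[of "- L" "\<phi> X" \<epsilon>] divide_right_mono[of "\<phi> X" L \<epsilon>] \<epsilon>_pos by auto
qed

lemma AE_exp_bounded_potential_le:
  assumes "bounded_potential L \<phi>"
  shows "AE X in \<mu>. norm X \<le> R \<and> \<bar>exp (\<phi> X / \<epsilon>)\<bar> \<le> exp (L / \<epsilon>)"
  using exp_bounded_potential[OF assms] \<Omega>_subset_cball by (intro AE_I2) auto

lemma measurable_exp_bounded_potential:
  assumes "bounded_potential L \<phi>"
  shows "(\<lambda>X. exp (\<phi> X / \<epsilon>)) \<in> borel_measurable \<mu>"
proof -
  have [measurable]: "\<phi> \<in> borel_measurable \<mu>"
    using assms unfolding bounded_potential_def by simp
  show ?thesis
    by measurable
qed

lemma integrable_mu_conv:
  assumes "bounded_potential L \<phi>"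
  shows "integrable \<mu> (\<lambda>X. exp (\<phi> X / \<epsilon>) * gauss_kernel \<epsilon> X Y)"
  using AE_exp_bounded_potential_le[OF assms]
  by (intro integrable_gauss_kernel_weighted[OF finite_\<mu> \<epsilon>_pos measurable_id_\<mu>
        measurable_exp_bounded_potential[OF assms], where B = "exp (L / \<epsilon>)"])
    (auto elim: eventually_mono)

lemma integrable_mu_conv_scaleR:
  assumes "bounded_potential L \<phi>"
  shows "integrable \<mu> (\<lambda>X. (exp (\<phi> X / \<epsilon>) * gauss_kernel \<epsilon> X Y) *\<^sub>R X)"
proof (rule finite_measure.integrable_const_bound[OF finite_\<mu>, where B = "exp (L / \<epsilon>) * R"])
  show "AE X in \<mu>. norm ((exp (\<phi> X / \<epsilon>) * gauss_kernel \<epsilon> X Y) *\<^sub>R X) \<le> exp (L / \<epsilon>) * R"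
  proof (rule AE_I2)
    fix X
    assume "X \<in> space \<mu>"
    then have "X \<in> \<Omega>" "norm X \<le> R"
      using \<Omega>_subset_cball by auto
    then have "exp (\<phi> X / \<epsilon>) * gauss_kernel \<epsilon> X Y \<le> exp (L / \<epsilon>) * 1"
      using exp_bounded_potential(2)[OF assms] gauss_kernel_le_1[OF \<epsilon>_pos]
      by (intro mult_mono) (auto simp: less_imp_le[OF gauss_kernel_pos])
    then show "norm ((exp (\<phi> X / \<epsilon>) * gauss_kernel \<epsilon> X Y) *\<^sub>R X) \<le> exp (L / \<epsilon>) * R"
      using \<open>norm X \<le> R\<close> gauss_kernel_pos[of \<epsilon> X Y] by (simp add: mult_mono)
  qed
  show "(\<lambda>X. (exp (\<phi> X / \<epsilon>) * gauss_kernel \<epsilon> X Y) *\<^sub>R X) \<in> borel_measurable \<mu>"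
    using measurable_exp_bounded_potential[OF assms] measurable_id_\<mu> by measurable
qed

lemma has_derivative_mu_conv:
  assumes "bounded_potential L \<phi>"
  shows "(mu_conv \<phi> has_derivative
     (\<lambda>v. (\<integral>X. (exp (\<phi> X / \<epsilon>) * gauss_kernel \<epsilon> X Y / \<epsilon>) *\<^sub>R (X - Y) \<partial>\<mu>) \<bullet> v)) (at Y)"
  unfolding mu_conv_def[abs_def]
  by (rule has_derivative_gauss_kernel_integral[OF finite_\<mu> \<epsilon>_pos measurable_id_\<mu>
        measurable_exp_bounded_potential[OF assms] R_nonneg AE_exp_bounded_potential_le[OF assms]])

lemma mu_conv_lower_bound:
  assumes "bounded_potential L \<phi>" "norm Y \<le> R'" "R \<le> R'"
  shows "exp (- L / \<epsilon>) * exp (- (2 * R')\<^sup>2 / (2 * \<epsilon>)) * measure \<mu> \<Omega> \<le> mu_conv \<phi> Y"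
proof -
  interpret finite_measure \<mu>
    by (rule finite_\<mu>)
  have "(\<integral>X. exp (- L / \<epsilon>) * exp (- (2 * R')\<^sup>2 / (2 * \<epsilon>)) \<partial>\<mu>) \<le> mu_conv \<phi> Y"
    unfolding mu_conv_def
  proof (rule integral_mono[OF _ integrable_mu_conv[OF assms(1)]])
    fix X
    assume "X \<in> space \<mu>"
    then have "X \<in> \<Omega>" "norm X \<le> R'"
      using \<Omega>_subset_cball assms by auto
    then show "exp (- L / \<epsilon>) * exp (- (2 * R')\<^sup>2 / (2 * \<epsilon>)) \<le> exp (\<phi> X / \<epsilon>) * gauss_kernel \<epsilon> X Y"
      using exp_bounded_potential(1)[OF assms(1)] gauss_kernel_lower_bound[OF \<epsilon>_pos _ assms(2)]
      by (intro mult_mono) auto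
  qed simp
  then show ?thesis
    by (simp add: mult_ac)
qed

lemma mu_conv_pos:
  assumes "bounded_potential L \<phi>"
  shows "0 < mu_conv \<phi> Y"
proof -
  have "0 < exp (- L / \<epsilon>) * exp (- (2 * max R (norm Y))\<^sup>2 / (2 * \<epsilon>)) * measure \<mu> \<Omega>"
    using measure_\<Omega>_pos by simp
  also have "\<dots> \<le> mu_conv \<phi> Y"
    by (rule mu_conv_lower_bound[OF assms]) auto
  finally show ?thesis .
qed

lemma exp_psi_transform:
  assumes "bounded_potential L \<phi>"
  shows "exp (psi_transform \<phi> Y / \<epsilon>) = 1 / mu_conv \<phi> Y"
  using mu_conv_pos[OF assms, of Y] \<epsilon>_pos
  by (simp add: psi_transform_def exp_minus inverse_eq_divide)

definition psi_bound :: "real \<Rightarrow> real" where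
  "psi_bound L = exp (L / \<epsilon>) * exp ((2 * R)\<^sup>2 / (2 * \<epsilon>)) / measure \<mu> \<Omega>"

lemma psi_bound_pos: "0 < psi_bound L"
  unfolding psi_bound_def using measure_\<Omega>_pos by simp

lemma exp_psi_transform_le:
  assumes "bounded_potential L \<phi>" "norm Y \<le> R"
  shows "exp (psi_transform \<phi> Y / \<epsilon>) \<le> psi_bound L"
proof -
  have "exp (- L / \<epsilon>) * exp (- (2 * R)\<^sup>2 / (2 * \<epsilon>)) * measure \<mu> \<Omega> \<le> mu_conv \<phi> Y"
    using mu_conv_lower_bound[OF assms order_refl] .
  then have "1 / mu_conv \<phi> Y \<le> 1 / (exp (- L / \<epsilon>) * exp (- (2 * R)\<^sup>2 / (2 * \<epsilon>)) * measure \<mu> \<Omega>)"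
    using measure_\<Omega>_pos mu_conv_pos[OF assms(1)] by (intro divide_left_mono) auto
  also have "\<dots> = psi_bound L"
    unfolding psi_bound_def by (simp add: exp_minus field_simps)
  finally show ?thesis
    unfolding exp_psi_transform[OF assms(1)] .
qed

lemma has_derivative_psi_transform:
  assumes "bounded_potential L \<phi>"
  shows "(psi_transform \<phi> has_derivative
     (\<lambda>v. ((\<integral>X. (exp (\<phi> X / \<epsilon>) * gauss_kernel \<epsilon> X Y / \<epsilon>) *\<^sub>R (X - Y) \<partial>\<mu>) \<bullet> v)
            * inverse (mu_conv \<phi> Y) * (- \<epsilon>))) (at Y)"
  using has_derivative_mult_left[OF DERIV_compose_FDERIV[OF DERIV_ln[OF mu_conv_pos[OF assms]]
      has_derivative_mu_conv[OF assms]], of "- \<epsilon>"]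
  unfolding psi_transform_def[abs_def] by (simp add: mult_ac)

lemma continuous_on_psi_transform:
  assumes "bounded_potential L \<phi>"
  shows "continuous_on UNIV (psi_transform \<phi>)"
  using has_derivative_continuous[OF has_derivative_psi_transform[OF assms]]
  by (intro continuous_at_imp_continuous_on) auto

lemma measurable_exp_psi_transform:
  assumes "bounded_potential L \<phi>"
  shows "(\<lambda>Y. exp (psi_transform \<phi> Y / \<epsilon>)) \<in> borel_measurable \<sigma>"
proof -
  have [measurable]: "psi_transform \<phi> \<in> borel_measurable \<sigma>"
    using continuous_on_psi_transform[OF assms] by (rule continuous_imp_measurable_\<sigma>)
  show ?thesis
    by measurable
qed

lemma AE_exp_psi_transform_le:
  assumes "bounded_potential L \<phi>"
  shows "AE Y in \<sigma>. norm Y \<le> R \<and> \<bar>exp (psi_transform \<phi> Y / \<epsilon>)\<bar> \<le> psi_bound L"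
  using AE_\<sigma>_norm_le by eventually_elim (use exp_psi_transform_le[OF assms] in simp)

lemma sigma_conv_nonneg: "0 \<le> sigma_conv \<psi> X"
  unfolding sigma_conv_def
  by (intro Bochner_Integration.integral_nonneg mult_nonneg_nonneg less_imp_le[OF gauss_kernel_pos]) simp

lemma integrable_sigma_conv:
  assumes "bounded_potential L \<phi>"
  shows "integrable \<sigma> (\<lambda>Y. exp (psi_transform \<phi> Y / \<epsilon>) * gauss_kernel \<epsilon> X Y)"
  using AE_exp_psi_transform_le[OF assms] unfolding gauss_kernel_commute[of \<epsilon> X]
  by (intro integrable_gauss_kernel_weighted[OF finite_\<sigma> \<epsilon>_pos measurable_id_\<sigma>
        measurable_exp_psi_transform[OF assms], where B = "psi_bound L"])
    (auto elim: eventually_mono)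

lemma sigma_conv_le:
  assumes "bounded_potential L \<phi>"
  shows "sigma_conv (psi_transform \<phi>) X \<le> measure \<sigma> (space \<sigma>) * psi_bound L"
proof -
  interpret finite_measure \<sigma>
    by (rule finite_\<sigma>)
  have "sigma_conv (psi_transform \<phi>) X \<le> (\<integral>Y. psi_bound L \<partial>\<sigma>)"
    unfolding sigma_conv_def
  proof (rule integral_mono_AE[OF integrable_sigma_conv[OF assms]])
    show "AE Y in \<sigma>. exp (psi_transform \<phi> Y / \<epsilon>) * gauss_kernel \<epsilon> X Y \<le> psi_bound L"
      using AE_\<sigma>_norm_le
    proof eventually_elim
      case (elim Y)
      show ?case
        using mult_mono[OF exp_psi_transform_le[OF assms elim] gauss_kernel_le_1[OF \<epsilon>_pos]]
          psi_bound_pos[of L] gauss_kernel_pos[of \<epsilon> X Y] by simp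
    qed
  qed simp
  then show ?thesis
    by simp
qed

lemma continuous_on_sigma_conv:
  assumes "bounded_potential L \<phi>"
  shows "continuous_on UNIV (sigma_conv (psi_transform \<phi>))"
proof (intro continuous_at_imp_continuous_on ballI)
  fix X :: "real^2"
  have "((\<lambda>X. \<integral>Y. exp (psi_transform \<phi> Y / \<epsilon>) * gauss_kernel \<epsilon> Y X \<partial>\<sigma>) has_derivative
      (\<lambda>v. (\<integral>Y. (exp (psi_transform \<phi> Y / \<epsilon>) * gauss_kernel \<epsilon> Y X / \<epsilon>) *\<^sub>R (Y - X) \<partial>\<sigma>) \<bullet> v)) (at X)"
    by (rule has_derivative_gauss_kernel_integral[OF finite_\<sigma> \<epsilon>_pos measurable_id_\<sigma>
          measurable_exp_psi_transform[OF assms] R_nonneg AE_exp_psi_transform_le[OF assms]])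
  moreover have "sigma_conv (psi_transform \<phi>)
      = (\<lambda>X. \<integral>Y. exp (psi_transform \<phi> Y / \<epsilon>) * gauss_kernel \<epsilon> Y X \<partial>\<sigma>)"
    unfolding sigma_conv_def by (simp add: gauss_kernel_commute)
  ultimately show "isCont (sigma_conv (psi_transform \<phi>)) X"
    by (simp add: has_derivative_continuous)
qed


lemma continuous_on_sinkhorn_map:
  assumes "bounded_potential L \<phi>"
  shows "continuous_on UNIV (sinkhorn_map \<phi>)"
proof -
  have "(\<lambda>X. \<kappa> * sigma_conv (psi_transform \<phi>) X) ` UNIV \<subseteq> {0..}"
    using \<kappa>_pos sigma_conv_nonneg by auto
  then have "continuous_on UNIV (\<lambda>X. lambert_W0 (\<kappa> * sigma_conv (psi_transform \<phi>) X))"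
    by (intro continuous_on_compose2[OF continuous_on_lambert_W0]
        continuous_intros continuous_on_sigma_conv[OF assms])
  then show ?thesis
    unfolding sinkhorn_map_def phi_transform_def[abs_def] by (intro continuous_intros)
qed

text \<open>The constant is chosen so that
  \<open>\<kappa> \<sigma>(\<real>\<^sup>2) psi_bound potential_bound = (potential_bound / \<epsilon>) e\<^bsup>potential_bound / \<epsilon>\<^esup>\<close>,
  which makes the Sinkhorn map preserve potentials with values in \<open>[-potential_bound, 0]\<close>.\<close>

definition potential_bound :: real where
  "potential_bound = \<epsilon> * \<kappa> * measure \<sigma> (space \<sigma>) * exp ((2 * R)\<^sup>2 / (2 * \<epsilon>)) / measure \<mu> \<Omega>"

lemma potential_bound_nonneg: "0 \<le> potential_bound"
  unfolding potential_bound_def using \<epsilon>_pos \<kappa>_pos measure_\<Omega>_pos by simp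

lemma lambert_W0_sinkhorn_le:
  assumes "bounded_potential potential_bound \<phi>"
  shows "lambert_W0 (\<kappa> * sigma_conv (psi_transform \<phi>) X) \<le> potential_bound / \<epsilon>"
proof (rule lambert_W0_le)
  show "0 \<le> \<kappa> * sigma_conv (psi_transform \<phi>) X"
    using \<kappa>_pos sigma_conv_nonneg by simp
  show "0 \<le> potential_bound / \<epsilon>"
    using potential_bound_nonneg \<epsilon>_pos by simp
  have "\<kappa> * sigma_conv (psi_transform \<phi>) X \<le> \<kappa> * (measure \<sigma> (space \<sigma>) * psi_bound potential_bound)"
    using sigma_conv_le[OF assms] \<kappa>_pos by (intro mult_left_mono) auto
  also have "\<dots> = (\<kappa> * measure \<sigma> (space \<sigma>) * exp ((2 * R)\<^sup>2 / (2 * \<epsilon>)) / measure \<mu> \<Omega>)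
      * exp (potential_bound / \<epsilon>)"
    unfolding psi_bound_def by (simp add: field_simps)
  also have "\<kappa> * measure \<sigma> (space \<sigma>) * exp ((2 * R)\<^sup>2 / (2 * \<epsilon>)) / measure \<mu> \<Omega> = potential_bound / \<epsilon>"
    unfolding potential_bound_def using \<epsilon>_pos by simp
  finally show "\<kappa> * sigma_conv (psi_transform \<phi>) X \<le> potential_bound / \<epsilon> * exp (potential_bound / \<epsilon>)" .
qed

lemma sinkhorn_map_bounds:
  assumes "bounded_potential potential_bound \<phi>"
  shows "- potential_bound \<le> sinkhorn_map \<phi> X" "sinkhorn_map \<phi> X \<le> 0"
proof -
  have "0 \<le> \<kappa> * sigma_conv (psi_transform \<phi>) X"
    using \<kappa>_pos sigma_conv_nonneg by simp
  then show "sinkhorn_map \<phi> X \<le> 0"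
    unfolding sinkhorn_map_def phi_transform_def using lambert_W0_nonneg \<epsilon>_pos by simp
  have "\<epsilon> * lambert_W0 (\<kappa> * sigma_conv (psi_transform \<phi>) X) \<le> \<epsilon> * (potential_bound / \<epsilon>)"
    using lambert_W0_sinkhorn_le[OF assms] \<epsilon>_pos by (intro mult_left_mono) auto
  then show "- potential_bound \<le> sinkhorn_map \<phi> X"
    unfolding sinkhorn_map_def phi_transform_def using \<epsilon>_pos by simp
qed

lemma mu_conv_le_exp_mult:
  assumes "bounded_potential L \<phi>\<^sub>1" "bounded_potential L \<phi>\<^sub>2" "\<forall>X\<in>\<Omega>. \<bar>\<phi>\<^sub>1 X - \<phi>\<^sub>2 X\<bar> \<le> d"
  shows "mu_conv \<phi>\<^sub>1 Y \<le> exp (d / \<epsilon>) * mu_conv \<phi>\<^sub>2 Y"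
proof -
  have "mu_conv \<phi>\<^sub>1 Y \<le> (\<integral>X. exp (d / \<epsilon>) * (exp (\<phi>\<^sub>2 X / \<epsilon>) * gauss_kernel \<epsilon> X Y) \<partial>\<mu>)"
    unfolding mu_conv_def
  proof (rule integral_mono[OF integrable_mu_conv[OF assms(1)]])
    show "integrable \<mu> (\<lambda>X. exp (d / \<epsilon>) * (exp (\<phi>\<^sub>2 X / \<epsilon>) * gauss_kernel \<epsilon> X Y))"
      using integrable_mu_conv[OF assms(2)] by simp
    fix X
    assume "X \<in> space \<mu>"
    then have "\<phi>\<^sub>1 X \<le> d + \<phi>\<^sub>2 X"
      using assms(3) by (auto simp: abs_le_iff)
    then have "\<phi>\<^sub>1 X / \<epsilon> \<le> d / \<epsilon> + \<phi>\<^sub>2 X / \<epsilon>"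
      using \<epsilon>_pos by (simp add: add_divide_distrib[symmetric] divide_right_mono)
    then have "exp (\<phi>\<^sub>1 X / \<epsilon>) \<le> exp (d / \<epsilon>) * exp (\<phi>\<^sub>2 X / \<epsilon>)"
      by (simp add: exp_add[symmetric])
    then show "exp (\<phi>\<^sub>1 X / \<epsilon>) * gauss_kernel \<epsilon> X Y
        \<le> exp (d / \<epsilon>) * (exp (\<phi>\<^sub>2 X / \<epsilon>) * gauss_kernel \<epsilon> X Y)"
      using gauss_kernel_pos[of \<epsilon> X Y] by (simp add: mult.assoc[symmetric])
  qed
  then show ?thesis
    unfolding mu_conv_def by simp
qed

lemma sigma_conv_le_exp_mult:
  assumes "bounded_potential L \<phi>\<^sub>1" "bounded_potential L \<phi>\<^sub>2" "\<forall>X\<in>\<Omega>. \<bar>\<phi>\<^sub>1 X - \<phi>\<^sub>2 X\<bar> \<le> d"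
  shows "sigma_conv (psi_transform \<phi>\<^sub>2) X \<le> exp (d / \<epsilon>) * sigma_conv (psi_transform \<phi>\<^sub>1) X"
proof -
  have exp_le: "exp (psi_transform \<phi>\<^sub>2 Y / \<epsilon>) \<le> exp (d / \<epsilon>) * exp (psi_transform \<phi>\<^sub>1 Y / \<epsilon>)" for Y
    using mu_conv_le_exp_mult[OF assms, of Y] mu_conv_pos[OF assms(1), of Y] mu_conv_pos[OF assms(2), of Y]
    unfolding exp_psi_transform[OF assms(1)] exp_psi_transform[OF assms(2)] by (simp add: field_simps)
  have "sigma_conv (psi_transform \<phi>\<^sub>2) X
      \<le> (\<integral>Y. exp (d / \<epsilon>) * (exp (psi_transform \<phi>\<^sub>1 Y / \<epsilon>) * gauss_kernel \<epsilon> X Y) \<partial>\<sigma>)"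
    unfolding sigma_conv_def
  proof (rule integral_mono[OF integrable_sigma_conv[OF assms(2)]
        integrable_mult_right[OF integrable_sigma_conv[OF assms(1)]]])
    fix Y
    show "exp (psi_transform \<phi>\<^sub>2 Y / \<epsilon>) * gauss_kernel \<epsilon> X Y
        \<le> exp (d / \<epsilon>) * (exp (psi_transform \<phi>\<^sub>1 Y / \<epsilon>) * gauss_kernel \<epsilon> X Y)"
      using mult_right_mono[OF exp_le[of Y] less_imp_le[OF gauss_kernel_pos]] by (simp add: mult.assoc)
  qed
  then show ?thesis
    unfolding sigma_conv_def by simp
qed

definition contraction_factor :: real where
  "contraction_factor = (potential_bound / \<epsilon>) / (1 + potential_bound / \<epsilon>)"

lemma contraction_factor: "0 \<le> contraction_factor" "contraction_factor < 1"
proof -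
  have "0 \<le> potential_bound / \<epsilon>"
    using potential_bound_nonneg \<epsilon>_pos by simp
  moreover have "0 \<le> t / (1 + t)" "t / (1 + t) < 1" if "0 \<le> t" for t :: real
    using that by auto
  ultimately show "0 \<le> contraction_factor" "contraction_factor < 1"
    unfolding contraction_factor_def by blast+
qed

lemma sinkhorn_map_contraction:
  assumes "bounded_potential potential_bound \<phi>\<^sub>1" "bounded_potential potential_bound \<phi>\<^sub>2"
    and "\<forall>X\<in>\<Omega>. \<bar>\<phi>\<^sub>1 X - \<phi>\<^sub>2 X\<bar> \<le> d"
  shows "\<bar>sinkhorn_map \<phi>\<^sub>1 X - sinkhorn_map \<phi>\<^sub>2 X\<bar> \<le> contraction_factor * d"
proof -
  have one_sided: "sinkhorn_map \<phi> X - sinkhorn_map \<phi>' X \<le> contraction_factor * d"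
    if bounded: "bounded_potential potential_bound \<phi>" "bounded_potential potential_bound \<phi>'"
      and close: "\<forall>X\<in>\<Omega>. \<bar>\<phi> X - \<phi>' X\<bar> \<le> d" for \<phi> \<phi>'
  proof -
    define y y' where "y = \<kappa> * sigma_conv (psi_transform \<phi>) X"
      and "y' = \<kappa> * sigma_conv (psi_transform \<phi>') X"
    have y_nonneg: "0 \<le> y" "0 \<le> y'"
      unfolding y_def y'_def using \<kappa>_pos sigma_conv_nonneg by simp_all
    obtain X\<^sub>0 where "X\<^sub>0 \<in> \<Omega>"
      using \<Omega>_nonempty by blast
    then have "0 \<le> d / \<epsilon>"
      using close abs_ge_zero[of "\<phi> X\<^sub>0 - \<phi>' X\<^sub>0"] \<epsilon>_pos by (auto simp del: abs_ge_zero)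
    have "y' \<le> exp (d / \<epsilon>) * y"
      using mult_left_mono[OF sigma_conv_le_exp_mult[OF bounded close, of X] less_imp_le[OF \<kappa>_pos]]
      unfolding y_def y'_def by (simp add: mult.left_commute)
    moreover have "lambert_W0 y' \<le> potential_bound / \<epsilon>"
      unfolding y'_def by (rule lambert_W0_sinkhorn_le[OF bounded(2)])
    ultimately have "lambert_W0 y' - lambert_W0 y \<le> d / \<epsilon> * contraction_factor"
      using lambert_W0_diff_le[OF y_nonneg(2,1) \<open>0 \<le> d / \<epsilon>\<close>] unfolding contraction_factor_def by blast
    then have "\<epsilon> * (lambert_W0 y' - lambert_W0 y) \<le> \<epsilon> * (d / \<epsilon> * contraction_factor)"
      using \<epsilon>_pos by (intro mult_left_mono) auto
    also have "\<epsilon> * (d / \<epsilon> * contraction_factor) = contraction_factor * d"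
      using \<epsilon>_pos by simp
    finally show ?thesis
      unfolding sinkhorn_map_def phi_transform_def y_def[symmetric] y'_def[symmetric]
      by (simp add: right_diff_distrib)
  qed
  have "\<forall>X\<in>\<Omega>. \<bar>\<phi>\<^sub>2 X - \<phi>\<^sub>1 X\<bar> \<le> d"
    using assms(3) by (simp add: abs_minus_commute)
  then show ?thesis
    using one_sided[OF assms] one_sided[OF assms(2,1)] unfolding abs_le_iff by linarith
qed

lemma bounded_potential_bcontfun:
  assumes "\<forall>X. - potential_bound \<le> apply_bcontfun p X \<and> apply_bcontfun p X \<le> 0"
  shows "bounded_potential potential_bound (apply_bcontfun p)"
proof -
  have "\<bar>apply_bcontfun p X\<bar> \<le> potential_bound" for X
  proof -
    have "- potential_bound \<le> apply_bcontfun p X" "apply_bcontfun p X \<le> 0"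
      using assms by auto
    then show ?thesis
      using potential_bound_nonneg by linarith
  qed
  then show ?thesis
    unfolding bounded_potential_def by (simp add: continuous_imp_measurable_\<mu>)
qed

lemma sinkhorn_map_bcontfun:
  assumes "bounded_potential potential_bound \<phi>"
  shows "sinkhorn_map \<phi> \<in> bcontfun"
  using continuous_on_sinkhorn_map[OF assms]
proof (rule bcontfun_normI)
  show "norm (sinkhorn_map \<phi> X) \<le> potential_bound" for X
    using sinkhorn_map_bounds[OF assms, of X] potential_bound_nonneg by simp
qed

lemma sinkhorn_fixed_point_exists:
  "\<exists>\<phi>. continuous_on UNIV \<phi> \<and> bounded_potential potential_bound \<phi> \<and> (\<forall>X. sinkhorn_map \<phi> X = \<phi> X)"
proof -
  define S :: "((real^2) \<Rightarrow>\<^sub>C real) set" where "S = PiC UNIV (\<lambda>_. {- potential_bound..0})"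
  have mem_S: "p \<in> S \<longleftrightarrow> (\<forall>X. - potential_bound \<le> apply_bcontfun p X \<and> apply_bcontfun p X \<le> 0)" for p
    unfolding S_def mem_PiC_iff by (auto simp: Pi_iff)
  note bounded_S = bounded_potential_bcontfun[OF mem_S[THEN iffD1]]
  define T where "T p = Bcontfun (sinkhorn_map (apply_bcontfun p))" for p
  have apply_T: "apply_bcontfun (T p) = sinkhorn_map (apply_bcontfun p)" if "p \<in> S" for p
    unfolding T_def using sinkhorn_map_bcontfun[OF bounded_S[OF that]] by (simp add: Bcontfun_inverse)
  have "\<exists>!p\<in>S. T p = p"
  proof (rule Banach_fix[OF _ _ contraction_factor])
    show "complete S"
      unfolding complete_eq_closed S_def by (rule closed_PiC) auto
    have "const_bcontfun 0 \<in> S"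
      unfolding mem_S using potential_bound_nonneg by (simp add: const_bcontfun.rep_eq)
    then show "S \<noteq> {}"
      by blast
    show "T ` S \<subseteq> S"
    proof (rule image_subsetI)
      fix p
      assume "p \<in> S"
      show "T p \<in> S"
        unfolding mem_S apply_T[OF \<open>p \<in> S\<close>]
        using sinkhorn_map_bounds[OF bounded_S[OF \<open>p \<in> S\<close>]] by blast
    qed
    fix p q
    assume "p \<in> S" "q \<in> S"
    show "dist (T p) (T q) \<le> contraction_factor * dist p q"
    proof (rule dist_bound)
      fix X
      have "\<forall>Z\<in>\<Omega>. \<bar>apply_bcontfun p Z - apply_bcontfun q Z\<bar> \<le> dist p q"
        using dist_bounded[of p _ q] by (auto simp: dist_real_def)
      then show "dist (apply_bcontfun (T p) X) (apply_bcontfun (T q) X) \<le> contraction_factor * dist p q"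
        unfolding apply_T[OF \<open>p \<in> S\<close>] apply_T[OF \<open>q \<in> S\<close>] dist_real_def
        by (rule sinkhorn_map_contraction[OF bounded_S[OF \<open>p \<in> S\<close>] bounded_S[OF \<open>q \<in> S\<close>]])
    qed
  qed
  then obtain p where "p \<in> S" "T p = p"
    by blast
  show ?thesis
  proof (intro exI conjI)
    show "continuous_on UNIV (apply_bcontfun p)"
      by (rule continuous_on_apply_bcontfun)
    show "bounded_potential potential_bound (apply_bcontfun p)"
      using \<open>p \<in> S\<close> by (rule bounded_S)
    show "\<forall>X. sinkhorn_map (apply_bcontfun p) X = apply_bcontfun p X"
      using apply_T[OF \<open>p \<in> S\<close>] \<open>T p = p\<close> by simp
  qed
qed

end

section \<open>Optimality of the fixed point\<close>

lemma ot_obj_le_entropic_OT: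
  assumes "continuous_on \<Omega> \<phi>" "continuous_on UNIV \<psi>"
  shows "ot_obj \<epsilon> \<Omega> \<sigma> h \<phi> \<psi> \<le> entropic_OT \<epsilon> \<Omega> \<sigma> h"
proof -
  have "(\<phi>, \<psi>) \<in> {(\<phi>, \<psi>). continuous_on \<Omega> \<phi> \<and> continuous_on UNIV \<psi>}"
    using assms by simp
  then have "ot_obj \<epsilon> \<Omega> \<sigma> h (fst (\<phi>, \<psi>)) (snd (\<phi>, \<psi>)) \<le> entropic_OT \<epsilon> \<Omega> \<sigma> h"
    unfolding entropic_OT_def by (rule SUP_upper)
  then show ?thesis
    by simp
qed

locale gaussian_entropic_dual_optimum = gaussian_entropic_dual +
  fixes \<phi> :: "real^2 \<Rightarrow> real"
  assumes continuous_\<phi>: "continuous_on \<Omega> \<phi>"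
    and bounded_\<phi>: "bounded_potential potential_bound \<phi>"
    and sinkhorn_fixed_point: "\<And>X. X \<in> \<Omega> \<Longrightarrow> sinkhorn_map \<phi> X = \<phi> X"
begin

definition \<psi> :: "real^2 \<Rightarrow> real" where
  "\<psi> = psi_transform \<phi>"

definition plan :: "real^2 \<Rightarrow> real^2 \<Rightarrow> real" where
  "plan X Y = exp ((\<phi> X + \<psi> Y) / \<epsilon>) * gauss_kernel \<epsilon> X Y"

definition h_opt :: "real^2 \<Rightarrow> real" where
  "h_opt X = - (f\<^sup>2 / g) * \<phi> X"

definition coupling_term :: "(real^2 \<Rightarrow> real) \<Rightarrow> (real^2 \<Rightarrow> real) \<Rightarrow> (real^2) \<times> (real^2) \<Rightarrow> real" where
  "coupling_term \<phi>' \<psi>' = (\<lambda>(X, Y). exp ((\<phi>' X + \<psi>' Y) / \<epsilon>) * gauss_kernel \<epsilon> X Y - 1)"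

lemma measurable_\<phi> [measurable]: "\<phi> \<in> borel_measurable \<mu>"
  using bounded_\<phi> unfolding bounded_potential_def by simp

lemma abs_\<phi>_le: "X \<in> \<Omega> \<Longrightarrow> \<bar>\<phi> X\<bar> \<le> potential_bound"
  using bounded_\<phi> unfolding bounded_potential_def by simp

lemma \<phi>_nonpos: "X \<in> \<Omega> \<Longrightarrow> \<phi> X \<le> 0"
  using sinkhorn_map_bounds(2)[OF bounded_\<phi>] sinkhorn_fixed_point by metis

lemma \<phi>_eq_phi_transform: "X \<in> \<Omega> \<Longrightarrow> \<phi> X = phi_transform \<psi> X"
  using sinkhorn_fixed_point unfolding sinkhorn_map_def \<psi>_def by simp

lemma continuous_\<psi>: "continuous_on UNIV \<psi>"
  unfolding \<psi>_def by (rule continuous_on_psi_transform[OF bounded_\<phi>])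

lemma measurable_\<psi> [measurable]: "\<psi> \<in> borel_measurable \<sigma>"
  using continuous_\<psi> by (rule continuous_imp_measurable_\<sigma>)

lemma integrable_\<mu>_bounded:
  fixes v :: "real^2 \<Rightarrow> real"
  assumes "v \<in> borel_measurable \<mu>" "\<And>X. X \<in> \<Omega> \<Longrightarrow> \<bar>v X\<bar> \<le> B"
  shows "integrable \<mu> v"
proof (rule finite_measure.integrable_const_bound[OF finite_\<mu>])
  show "AE X in \<mu>. norm (v X) \<le> B"
    by (rule AE_I2) (simp add: assms(2))
qed (rule assms(1))

lemma integrable_\<psi>: "integrable \<sigma> \<psi>"
proof -
  obtain B where B: "\<And>Y. Y \<in> cball 0 R \<Longrightarrow> norm (\<psi> Y) \<le> B"
    using compact_imp_bounded[OF compact_continuous_image[OF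
          continuous_on_subset[OF continuous_\<psi> subset_UNIV] compact_cball]]
    unfolding bounded_iff by blast
  have "AE Y in \<sigma>. norm (\<psi> Y) \<le> B"
    using AE_\<sigma>_norm_le
  proof eventually_elim
    case (elim Y)
    then show ?case
      using B[of Y] by simp
  qed
  then show ?thesis
    by (rule finite_measure.integrable_const_bound[OF finite_\<sigma>]) simp
qed

lemma plan_pos: "0 < plan X Y"
  unfolding plan_def by (simp add: gauss_kernel_pos)

lemma plan_eq_\<sigma>: "plan X Y = exp (\<phi> X / \<epsilon>) * (exp (\<psi> Y / \<epsilon>) * gauss_kernel \<epsilon> X Y)"
  unfolding plan_def by (simp add: add_divide_distrib exp_add)

lemma plan_eq_\<mu>: "plan X Y = exp (\<psi> Y / \<epsilon>) * (exp (\<phi> X / \<epsilon>) * gauss_kernel \<epsilon> X Y)"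
  unfolding plan_def by (simp add: add_divide_distrib exp_add)

lemma plan_le:
  assumes "X \<in> \<Omega>" "norm Y \<le> R"
  shows "plan X Y \<le> psi_bound potential_bound"
proof -
  have "exp (\<phi> X / \<epsilon>) \<le> 1"
    using \<phi>_nonpos[OF assms(1)] \<epsilon>_pos by (simp add: divide_nonpos_pos)
  moreover have "exp (\<psi> Y / \<epsilon>) \<le> psi_bound potential_bound"
    unfolding \<psi>_def by (rule exp_psi_transform_le[OF bounded_\<phi> assms(2)])
  ultimately have "plan X Y \<le> 1 * (psi_bound potential_bound * 1)"
    unfolding plan_eq_\<sigma>
    by (intro mult_mono gauss_kernel_le_1[OF \<epsilon>_pos])
      (auto simp: less_imp_le[OF gauss_kernel_pos] less_imp_le[OF psi_bound_pos])
  then show ?thesis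
    by simp
qed

lemma integral_plan_\<mu>: "(\<integral>X. plan X Y \<partial>\<mu>) = 1"
proof -
  have "(\<integral>X. plan X Y \<partial>\<mu>) = exp (\<psi> Y / \<epsilon>) * mu_conv \<phi> Y"
    unfolding plan_eq_\<mu> mu_conv_def by (rule integral_mult_right_zero)
  also have "\<dots> = 1"
    unfolding \<psi>_def exp_psi_transform[OF bounded_\<phi>] using mu_conv_pos[OF bounded_\<phi>, of Y] by simp
  finally show ?thesis .
qed

text \<open>The fixed-point equation for \<open>\<phi>\<close> says exactly that the first marginal of the plan
  has density \<open>h_opt\<close>.\<close>

lemma integral_plan_\<sigma>:
  assumes "X \<in> \<Omega>"
  shows "(\<integral>Y. plan X Y \<partial>\<sigma>) = h_opt X"
proof -
  define w where "w = lambert_W0 (\<kappa> * sigma_conv \<psi> X)"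
  have "0 \<le> \<kappa> * sigma_conv \<psi> X"
    using \<kappa>_pos sigma_conv_nonneg by simp
  then have w: "w * exp w = \<kappa> * sigma_conv \<psi> X"
    unfolding w_def by (rule lambert_W0_mult_exp)
  have \<phi>_X: "\<phi> X = - \<epsilon> * w"
    using \<phi>_eq_phi_transform[OF assms] unfolding phi_transform_def w_def .
  have "(\<integral>Y. plan X Y \<partial>\<sigma>) = exp (\<phi> X / \<epsilon>) * sigma_conv \<psi> X"
    unfolding plan_eq_\<sigma> sigma_conv_def by (rule integral_mult_right_zero)
  also have "\<dots> = exp (- w) * (w * exp w) / \<kappa>"
    unfolding \<phi>_X w using \<epsilon>_pos \<kappa>_pos by simp
  also have "\<dots> = h_opt X"
    unfolding h_opt_def \<phi>_X \<kappa>_def using f_pos g_pos \<epsilon>_pos by (simp add: exp_minus field_simps)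
  finally show ?thesis .
qed

lemma h_opt_nonneg:
  assumes "X \<in> \<Omega>"
  shows "0 \<le> h_opt X"
proof -
  have "f\<^sup>2 / g * \<phi> X \<le> 0"
    using \<phi>_nonpos[OF assms] g_pos by (intro mult_nonneg_nonpos) auto
  then show ?thesis
    unfolding h_opt_def by simp
qed

lemma abs_h_opt_le:
  assumes "X \<in> \<Omega>"
  shows "\<bar>h_opt X\<bar> \<le> f\<^sup>2 / g * potential_bound"
proof -
  have "f\<^sup>2 / g * \<bar>\<phi> X\<bar> \<le> f\<^sup>2 / g * potential_bound"
    using abs_\<phi>_le[OF assms] g_pos by (intro mult_left_mono) auto
  then show ?thesis
    unfolding h_opt_def abs_mult using g_pos by simp
qed

lemma measurable_h_opt [measurable]: "h_opt \<in> borel_measurable \<mu>"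
  unfolding h_opt_def by measurable

lemma pair_sigma_finite_\<mu>_\<sigma>: "pair_sigma_finite \<mu> \<sigma>"
  using finite_\<mu> finite_\<sigma> unfolding pair_sigma_finite_def by (simp add: finite_measure_def)

lemma finite_\<mu>_\<sigma>: "finite_measure (\<mu> \<Otimes>\<^sub>M \<sigma>)"
  by (rule finite_measure_pair_measure[OF finite_\<sigma> finite_\<mu>])

lemma measurable_fst_\<mu>_\<sigma> [measurable]: "(\<lambda>z. fst z) \<in> (\<mu> \<Otimes>\<^sub>M \<sigma>) \<rightarrow>\<^sub>M borel"
  by (rule measurable_compose[OF measurable_fst measurable_id_\<mu>])

lemma measurable_snd_\<mu>_\<sigma> [measurable]: "(\<lambda>z. snd z) \<in> (\<mu> \<Otimes>\<^sub>M \<sigma>) \<rightarrow>\<^sub>M borel"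
  by (rule measurable_compose[OF measurable_snd measurable_id_\<sigma>])

lemma measurable_plan [measurable]: "(\<lambda>z. plan (fst z) (snd z)) \<in> borel_measurable (\<mu> \<Otimes>\<^sub>M \<sigma>)"
  unfolding plan_def gauss_kernel_def by measurable

lemma AE_abs_plan_le:
  "AE z in \<mu> \<Otimes>\<^sub>M \<sigma>. \<bar>plan (fst z) (snd z)\<bar> \<le> psi_bound potential_bound"
proof -
  interpret pair_sigma_finite \<mu> \<sigma>
    by (rule pair_sigma_finite_\<mu>_\<sigma>)
  have "AE z in \<mu> \<Otimes>\<^sub>M \<sigma>. norm (snd z) \<le> R"
    using AE_\<sigma>_norm_le by (intro AE_pair_measure) (auto simp: AE_\<sigma>_norm_le)
  moreover have "AE z in \<mu> \<Otimes>\<^sub>M \<sigma>. fst z \<in> \<Omega>"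
    by (rule AE_I2) (auto simp: space_pair_measure)
  ultimately show ?thesis
    by eventually_elim (simp add: abs_of_pos[OF plan_pos] plan_le)
qed

lemma integrable_plan: "integrable (\<mu> \<Otimes>\<^sub>M \<sigma>) (\<lambda>z. plan (fst z) (snd z))"
  using AE_abs_plan_le by (intro finite_measure.integrable_const_bound[OF finite_\<mu>_\<sigma>]) auto

lemma integrable_plan_\<sigma>:
  assumes "X \<in> \<Omega>"
  shows "integrable \<sigma> (plan X)"
proof (rule finite_measure.integrable_const_bound[OF finite_\<sigma>])
  show "AE Y in \<sigma>. norm (plan X Y) \<le> psi_bound potential_bound"
    using AE_\<sigma>_norm_le by eventually_elim (simp add: abs_of_pos[OF plan_pos] plan_le[OF assms])
  show "plan X \<in> borel_measurable \<sigma>"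
    unfolding plan_def[abs_def] by measurable
qed

lemma plan_mult_snd:
  assumes "integrable \<sigma> u"
  shows "integrable (\<mu> \<Otimes>\<^sub>M \<sigma>) (\<lambda>z. plan (fst z) (snd z) * u (snd z))"
    and "(\<integral>z. plan (fst z) (snd z) * u (snd z) \<partial>(\<mu> \<Otimes>\<^sub>M \<sigma>)) = (\<integral>Y. u Y \<partial>\<sigma>)"
proof -
  interpret pair_sigma_finite \<mu> \<sigma>
    by (rule pair_sigma_finite_\<mu>_\<sigma>)
  have "integrable (\<mu> \<Otimes>\<^sub>M \<sigma>) (\<lambda>z. u (snd z) * plan (fst z) (snd z))"
    using integrable_comp_snd[OF finite_\<mu> M2.sigma_finite_measure_axioms assms] measurable_plan AE_abs_plan_le
    by (rule integrable_mult_bounded)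
  then show int: "integrable (\<mu> \<Otimes>\<^sub>M \<sigma>) (\<lambda>z. plan (fst z) (snd z) * u (snd z))"
    by (simp add: mult.commute)
  have "(\<integral>z. plan (fst z) (snd z) * u (snd z) \<partial>(\<mu> \<Otimes>\<^sub>M \<sigma>)) = (\<integral>Y. \<integral>X. plan X Y * u Y \<partial>\<mu> \<partial>\<sigma>)"
    using integral_snd[of "\<lambda>X Y. plan X Y * u Y"] int by (simp add: case_prod_unfold)
  also have "\<dots> = (\<integral>Y. u Y \<partial>\<sigma>)"
    by (simp add: integral_plan_\<mu>)
  finally show "(\<integral>z. plan (fst z) (snd z) * u (snd z) \<partial>(\<mu> \<Otimes>\<^sub>M \<sigma>)) = (\<integral>Y. u Y \<partial>\<sigma>)" .
qed

lemma plan_mult_fst: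
  assumes [measurable]: "v \<in> borel_measurable \<mu>" and "integrable \<mu> (\<lambda>X. v X * h_opt X)"
  shows "integrable (\<mu> \<Otimes>\<^sub>M \<sigma>) (\<lambda>z. plan (fst z) (snd z) * v (fst z))"
    and "(\<integral>z. plan (fst z) (snd z) * v (fst z) \<partial>(\<mu> \<Otimes>\<^sub>M \<sigma>)) = (\<integral>X. v X * h_opt X \<partial>\<mu>)"
proof -
  interpret pair_sigma_finite \<mu> \<sigma>
    by (rule pair_sigma_finite_\<mu>_\<sigma>)
  have inner_norm: "(\<integral>Y. \<bar>plan X Y * v X\<bar> \<partial>\<sigma>) = \<bar>v X * h_opt X\<bar>" if "X \<in> \<Omega>" for X
    using integral_plan_\<sigma>[OF that] h_opt_nonneg[OF that]
    by (simp add: abs_mult abs_of_pos[OF plan_pos])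
  show int: "integrable (\<mu> \<Otimes>\<^sub>M \<sigma>) (\<lambda>z. plan (fst z) (snd z) * v (fst z))"
  proof (rule Fubini_integrable)
    have "integrable \<mu> (\<lambda>X. \<integral>Y. \<bar>plan X Y * v X\<bar> \<partial>\<sigma>) \<longleftrightarrow> integrable \<mu> (\<lambda>X. \<bar>v X * h_opt X\<bar>)"
      by (rule Bochner_Integration.integrable_cong) (simp_all add: inner_norm)
    then show "integrable \<mu> (\<lambda>X. \<integral>Y. norm (plan (fst (X, Y)) (snd (X, Y)) * v (fst (X, Y))) \<partial>\<sigma>)"
      using assms(2) by simp
    show "AE X in \<mu>. integrable \<sigma> (\<lambda>Y. plan (fst (X, Y)) (snd (X, Y)) * v (fst (X, Y)))"
      by (rule AE_I2) (simp add: integrable_plan_\<sigma>)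
  qed measurable
  have "(\<integral>z. plan (fst z) (snd z) * v (fst z) \<partial>(\<mu> \<Otimes>\<^sub>M \<sigma>)) = (\<integral>X. \<integral>Y. plan X Y * v X \<partial>\<sigma> \<partial>\<mu>)"
    using integral_fst[of "\<lambda>X Y. plan X Y * v X"] int by (simp add: case_prod_unfold)
  also have "\<dots> = (\<integral>X. v X * h_opt X \<partial>\<mu>)"
    by (rule Bochner_Integration.integral_cong) (simp_all add: integral_plan_\<sigma>)
  finally show "(\<integral>z. plan (fst z) (snd z) * v (fst z) \<partial>(\<mu> \<Otimes>\<^sub>M \<sigma>)) = (\<integral>X. v X * h_opt X \<partial>\<mu>)" .
qed


text \<open>Its integral over \<open>\<mu> \<Otimes>\<^sub>M \<sigma>\<close> is the duality gap of the competitor \<open>(\<phi>', \<psi>')\<close>.\<close>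

definition bregman_gap :: "(real^2 \<Rightarrow> real) \<Rightarrow> (real^2 \<Rightarrow> real) \<Rightarrow> (real^2) \<times> (real^2) \<Rightarrow> real" where
  "bregman_gap \<phi>' \<psi>' = (\<lambda>(X, Y). plan X Y *
     (exp ((\<phi>' X - \<phi> X + (\<psi>' Y - \<psi> Y)) / \<epsilon>) - 1 - (\<phi>' X - \<phi> X + (\<psi>' Y - \<psi> Y)) / \<epsilon>))"

lemma bregman_gap_nonneg: "0 \<le> bregman_gap \<phi>' \<psi>' z"
proof -
  have "0 \<le> exp t - 1 - t" for t :: real
    using exp_ge_add_one_self[of t] by linarith
  then show ?thesis
    unfolding bregman_gap_def case_prod_unfold by (rule mult_nonneg_nonneg[OF less_imp_le[OF plan_pos]])
qed

lemma bregman_gap_eq_0_imp: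
  assumes "bregman_gap \<phi>' \<psi>' (X, Y) = 0"
  shows "\<phi>' X - \<phi> X + (\<psi>' Y - \<psi> Y) = 0"
proof (rule ccontr)
  define t where "t = (\<phi>' X - \<phi> X + (\<psi>' Y - \<psi> Y)) / \<epsilon>"
  assume "\<phi>' X - \<phi> X + (\<psi>' Y - \<psi> Y) \<noteq> 0"
  then have "t \<noteq> 0"
    unfolding t_def using \<epsilon>_pos by simp
  then have "1 + t < exp t"
    using exp_minus_greater[of "- t"] by simp
  then have "0 < plan X Y * (exp t - 1 - t)"
    using plan_pos[of X Y] by simp
  moreover have "bregman_gap \<phi>' \<psi>' (X, Y) = plan X Y * (exp t - 1 - t)"
    unfolding bregman_gap_def t_def by simp
  ultimately show False
    using assms by simp
qed

lemma bregman_gap_expand: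
  "bregman_gap \<phi>' \<psi>' (X, Y) = coupling_term \<phi>' \<psi>' (X, Y) - coupling_term \<phi> \<psi> (X, Y)
     - plan X Y * (\<phi>' X - \<phi> X) / \<epsilon> - plan X Y * (\<psi>' Y - \<psi> Y) / \<epsilon>"
proof -
  have "exp ((\<phi>' X + \<psi>' Y) / \<epsilon>) = exp ((\<phi> X + \<psi> Y) / \<epsilon>) * exp ((\<phi>' X - \<phi> X + (\<psi>' Y - \<psi> Y)) / \<epsilon>)"
    by (simp add: exp_add[symmetric] add_divide_distrib[symmetric])
  then have "bregman_gap \<phi>' \<psi>' (X, Y) = coupling_term \<phi>' \<psi>' (X, Y) - coupling_term \<phi> \<psi> (X, Y)
      - plan X Y * (\<phi>' X - \<phi> X + (\<psi>' Y - \<psi> Y)) / \<epsilon>"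
    unfolding bregman_gap_def coupling_term_def plan_def by (simp add: algebra_simps)
  moreover have "plan X Y * (\<phi>' X - \<phi> X + (\<psi>' Y - \<psi> Y)) / \<epsilon>
      = plan X Y * (\<phi>' X - \<phi> X) / \<epsilon> + plan X Y * (\<psi>' Y - \<psi> Y) / \<epsilon>"
    by (simp only: distrib_left add_divide_distrib)
  ultimately show ?thesis
    by linarith
qed

lemma integrable_\<phi>_h_opt: "integrable \<mu> (\<lambda>X. \<phi> X * h_opt X)"
proof (rule integrable_\<mu>_bounded)
  fix X
  assume "X \<in> \<Omega>"
  then show "\<bar>\<phi> X * h_opt X\<bar> \<le> potential_bound * (f\<^sup>2 / g * potential_bound)"
    unfolding abs_mult using abs_\<phi>_le abs_h_opt_le potential_bound_nonneg by (intro mult_mono) auto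
qed measurable

lemma integrable_\<phi>_sq: "integrable \<mu> (\<lambda>X. (\<phi> X)\<^sup>2)"
proof (rule integrable_\<mu>_bounded)
  fix X
  assume "X \<in> \<Omega>"
  then show "\<bar>(\<phi> X)\<^sup>2\<bar> \<le> potential_bound * potential_bound"
    unfolding power2_eq_square abs_mult using abs_\<phi>_le potential_bound_nonneg by (intro mult_mono) auto
qed measurable

lemma integrable_coupling_term_opt: "integrable (\<mu> \<Otimes>\<^sub>M \<sigma>) (coupling_term \<phi> \<psi>)"
proof -
  interpret finite_measure "\<mu> \<Otimes>\<^sub>M \<sigma>"
    by (rule finite_\<mu>_\<sigma>)
  show ?thesis
    using integrable_plan unfolding coupling_term_def plan_def by (simp add: case_prod_unfold)
qed

definition ot_value :: real where
  "ot_value = (\<integral>Y. \<psi> Y \<partial>\<sigma>) + (\<integral>X. \<phi> X * h_opt X \<partial>\<mu>) - \<epsilon> * integral\<^sup>L (\<mu> \<Otimes>\<^sub>M \<sigma>) (coupling_term \<phi> \<psi>)"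

lemma ot_gap:
  assumes [measurable]: "\<phi>' \<in> borel_measurable \<mu>"
    and "integrable \<sigma> \<psi>'" "integrable \<mu> (\<lambda>X. \<phi>' X * h_opt X)"
    and "integrable (\<mu> \<Otimes>\<^sub>M \<sigma>) (coupling_term \<phi>' \<psi>')"
  shows "integrable (\<mu> \<Otimes>\<^sub>M \<sigma>) (bregman_gap \<phi>' \<psi>')"
    and "(\<integral>Y. \<psi>' Y \<partial>\<sigma>) + (\<integral>X. \<phi>' X * h_opt X \<partial>\<mu>) - \<epsilon> * integral\<^sup>L (\<mu> \<Otimes>\<^sub>M \<sigma>) (coupling_term \<phi>' \<psi>')
      = ot_value - \<epsilon> * integral\<^sup>L (\<mu> \<Otimes>\<^sub>M \<sigma>) (bregman_gap \<phi>' \<psi>')"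
proof -
  have int_\<psi>: "integrable \<sigma> (\<lambda>Y. \<psi>' Y - \<psi> Y)"
    using assms(2) integrable_\<psi> by simp
  have int_\<phi>: "integrable \<mu> (\<lambda>X. (\<phi>' X - \<phi> X) * h_opt X)"
    using assms(3) integrable_\<phi>_h_opt by (simp add: left_diff_distrib)
  have "(\<lambda>X. \<phi>' X - \<phi> X) \<in> borel_measurable \<mu>"
    by measurable
  note marginal_\<phi> = plan_mult_fst[OF this int_\<phi>] and marginal_\<psi> = plan_mult_snd[OF int_\<psi>]
  define P where "P z = plan (fst z) (snd z)" for z
  have gap_eq: "bregman_gap \<phi>' \<psi>' = (\<lambda>z. coupling_term \<phi>' \<psi>' z - coupling_term \<phi> \<psi> z
      - P z * (\<phi>' (fst z) - \<phi> (fst z)) / \<epsilon> - P z * (\<psi>' (snd z) - \<psi> (snd z)) / \<epsilon>)"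
    unfolding P_def by (auto simp: bregman_gap_expand)
  have ints: "integrable (\<mu> \<Otimes>\<^sub>M \<sigma>) (coupling_term \<phi>' \<psi>')" "integrable (\<mu> \<Otimes>\<^sub>M \<sigma>) (coupling_term \<phi> \<psi>)"
    "integrable (\<mu> \<Otimes>\<^sub>M \<sigma>) (\<lambda>z. P z * (\<phi>' (fst z) - \<phi> (fst z)) / \<epsilon>)"
    "integrable (\<mu> \<Otimes>\<^sub>M \<sigma>) (\<lambda>z. P z * (\<psi>' (snd z) - \<psi> (snd z)) / \<epsilon>)"
    using assms(4) integrable_coupling_term_opt marginal_\<phi>(1) marginal_\<psi>(1) unfolding P_def by auto
  then show "integrable (\<mu> \<Otimes>\<^sub>M \<sigma>) (bregman_gap \<phi>' \<psi>')"
    unfolding gap_eq by (intro Bochner_Integration.integrable_diff)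
  define A B C D where "A = integral\<^sup>L (\<mu> \<Otimes>\<^sub>M \<sigma>) (coupling_term \<phi>' \<psi>')"
    and "B = integral\<^sup>L (\<mu> \<Otimes>\<^sub>M \<sigma>) (coupling_term \<phi> \<psi>)"
    and "C = (\<integral>X. \<phi>' X * h_opt X \<partial>\<mu>) - (\<integral>X. \<phi> X * h_opt X \<partial>\<mu>)"
    and "D = (\<integral>Y. \<psi>' Y \<partial>\<sigma>) - (\<integral>Y. \<psi> Y \<partial>\<sigma>)"
  have "integral\<^sup>L (\<mu> \<Otimes>\<^sub>M \<sigma>) (bregman_gap \<phi>' \<psi>') = A - B - C / \<epsilon> - D / \<epsilon>"
    using ints marginal_\<phi>(2) marginal_\<psi>(2) assms(2,3) integrable_\<psi> integrable_\<phi>_h_opt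
    unfolding gap_eq P_def A_def B_def C_def D_def by (simp add: left_diff_distrib)
  then have "\<epsilon> * integral\<^sup>L (\<mu> \<Otimes>\<^sub>M \<sigma>) (bregman_gap \<phi>' \<psi>') = \<epsilon> * (A - B - C / \<epsilon> - D / \<epsilon>)"
    by (simp only:)
  also have "\<dots> = \<epsilon> * A - \<epsilon> * B - C - D"
    using \<epsilon>_pos by (simp add: field_simps)
  finally show "(\<integral>Y. \<psi>' Y \<partial>\<sigma>) + (\<integral>X. \<phi>' X * h_opt X \<partial>\<mu>) - \<epsilon> * integral\<^sup>L (\<mu> \<Otimes>\<^sub>M \<sigma>) (coupling_term \<phi>' \<psi>')
      = ot_value - \<epsilon> * integral\<^sup>L (\<mu> \<Otimes>\<^sub>M \<sigma>) (bregman_gap \<phi>' \<psi>')"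
    unfolding ot_value_def A_def B_def C_def D_def by linarith
qed

lemma ot_obj_eq_if_integrable:
  assumes "integrable \<sigma> \<psi>'" "integrable \<mu> (\<lambda>X. \<phi>' X * h X)"
    and "integrable (\<mu> \<Otimes>\<^sub>M \<sigma>) (coupling_term \<phi>' \<psi>')"
  shows "ot_obj \<epsilon> \<Omega> \<sigma> h \<phi>' \<psi>' = ereal ((\<integral>Y. \<psi>' Y \<partial>\<sigma>) + (\<integral>X. \<phi>' X * h X \<partial>\<mu>)
    - \<epsilon> * integral\<^sup>L (\<mu> \<Otimes>\<^sub>M \<sigma>) (coupling_term \<phi>' \<psi>'))"
  using assms unfolding ot_obj_def coupling_term_def[symmetric] by simp

lemma ot_obj_opt: "ot_obj \<epsilon> \<Omega> \<sigma> h_opt \<phi> \<psi> = ereal ot_value"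
  unfolding ot_value_def
  by (rule ot_obj_eq_if_integrable[OF integrable_\<psi> integrable_\<phi>_h_opt integrable_coupling_term_opt])

lemma ot_obj_le:
  assumes "continuous_on \<Omega> \<phi>'" "continuous_on UNIV \<psi>'"
  shows "ot_obj \<epsilon> \<Omega> \<sigma> h_opt \<phi>' \<psi>' \<le> ereal ot_value"
proof (cases "integrable \<sigma> \<psi>' \<and> integrable \<mu> (\<lambda>X. \<phi>' X * h_opt X)
    \<and> integrable (\<mu> \<Otimes>\<^sub>M \<sigma>) (coupling_term \<phi>' \<psi>')")
  case True
  then have "ot_obj \<epsilon> \<Omega> \<sigma> h_opt \<phi>' \<psi>' = ereal ((\<integral>Y. \<psi>' Y \<partial>\<sigma>) + (\<integral>X. \<phi>' X * h_opt X \<partial>\<mu>)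
      - \<epsilon> * integral\<^sup>L (\<mu> \<Otimes>\<^sub>M \<sigma>) (coupling_term \<phi>' \<psi>'))"
    by (intro ot_obj_eq_if_integrable) auto
  also have "\<dots> = ereal (ot_value - \<epsilon> * integral\<^sup>L (\<mu> \<Otimes>\<^sub>M \<sigma>) (bregman_gap \<phi>' \<psi>'))"
    using True ot_gap(2)[OF continuous_imp_measurable_\<mu>[OF assms(1)]] by simp
  also have "\<dots> \<le> ereal ot_value"
    using \<epsilon>_pos Bochner_Integration.integral_nonneg[of "\<mu> \<Otimes>\<^sub>M \<sigma>" "bregman_gap \<phi>' \<psi>'"]
    by (simp add: bregman_gap_nonneg)
  finally show ?thesis .
next
  case False
  then have "ot_obj \<epsilon> \<Omega> \<sigma> h_opt \<phi>' \<psi>' = - \<infinity>"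
    by (simp only: ot_obj_def coupling_term_def[symmetric] if_not_P[OF False] if_False)
  then show ?thesis
    by simp
qed

lemma entropic_OT_h_opt: "entropic_OT \<epsilon> \<Omega> \<sigma> h_opt = ereal ot_value"
proof (rule antisym)
  show "entropic_OT \<epsilon> \<Omega> \<sigma> h_opt \<le> ereal ot_value"
    unfolding entropic_OT_def by (rule SUP_least) (auto intro: ot_obj_le)
  have "ot_obj \<epsilon> \<Omega> \<sigma> h_opt \<phi> \<psi> \<le> entropic_OT \<epsilon> \<Omega> \<sigma> h_opt"
    by (rule ot_obj_le_entropic_OT[OF continuous_\<phi> continuous_\<psi>])
  then show "ereal ot_value \<le> entropic_OT \<epsilon> \<Omega> \<sigma> h_opt"
    by (simp add: ot_obj_opt)
qed

definition dual_value :: real where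
  "dual_value = ot_value + f\<^sup>2 / (2 * g) * (\<integral>X. (\<phi> X)\<^sup>2 \<partial>\<mu>)"

lemma dual_obj_opt: "dual_obj f g \<Omega> \<sigma> \<epsilon> \<phi> \<psi> = ereal dual_value"
proof -
  have "(\<integral>X. \<phi> X * h_opt X \<partial>\<mu>) = (\<integral>X. - (f\<^sup>2 / g) * (\<phi> X)\<^sup>2 \<partial>\<mu>)"
    unfolding h_opt_def by (simp add: power2_eq_square mult_ac)
  also have "\<dots> = - (f\<^sup>2 / g) * (\<integral>X. (\<phi> X)\<^sup>2 \<partial>\<mu>)"
    by (rule integral_mult_right_zero)
  finally have "(\<integral>X. \<phi> X * h_opt X \<partial>\<mu>) = - (f\<^sup>2 / g) * (\<integral>X. (\<phi> X)\<^sup>2 \<partial>\<mu>)" .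
  then show ?thesis
    unfolding dual_obj_def coupling_term_def[symmetric] dual_value_def ot_value_def
    using integrable_\<psi> integrable_\<phi>_sq integrable_coupling_term_opt by simp
qed

text \<open>With \<open>a = f\<^sup>2/(2g)\<close> and \<open>h_opt = -2a\<phi>\<close>, the quadratic penalty splits as
  \<open>-a\<phi>'\<^sup>2 = \<phi>' h_opt + a\<phi>\<^sup>2 - a(\<phi>' - \<phi>)\<^sup>2\<close>, which reduces the dual gap to the transport gap.\<close>

lemma dual_gap:
  assumes "continuous_on \<Omega> \<phi>'" "integrable \<sigma> \<psi>'" "integrable \<mu> (\<lambda>X. (\<phi>' X)\<^sup>2)"
    and "integrable (\<mu> \<Otimes>\<^sub>M \<sigma>) (coupling_term \<phi>' \<psi>')"
  shows "integrable (\<mu> \<Otimes>\<^sub>M \<sigma>) (bregman_gap \<phi>' \<psi>')"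
    and "integrable \<mu> (\<lambda>X. (\<phi>' X - \<phi> X)\<^sup>2)"
    and "(\<integral>Y. \<psi>' Y \<partial>\<sigma>) - f\<^sup>2 / (2 * g) * (\<integral>X. (\<phi>' X)\<^sup>2 \<partial>\<mu>)
          - \<epsilon> * integral\<^sup>L (\<mu> \<Otimes>\<^sub>M \<sigma>) (coupling_term \<phi>' \<psi>')
        = dual_value - \<epsilon> * integral\<^sup>L (\<mu> \<Otimes>\<^sub>M \<sigma>) (bregman_gap \<phi>' \<psi>')
          - f\<^sup>2 / (2 * g) * (\<integral>X. (\<phi>' X - \<phi> X)\<^sup>2 \<partial>\<mu>)"
proof -
  define a where "a = f\<^sup>2 / (2 * g)"
  have "0 < a"
    unfolding a_def using f_pos g_pos by simp
  have measurable_\<phi>' [measurable]: "\<phi>' \<in> borel_measurable \<mu>"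
    using assms(1) by (rule continuous_imp_measurable_\<mu>)
  have "integrable \<mu> \<phi>'"
    by (rule finite_measure.square_integrable_imp_integrable[OF finite_\<mu> _ assms(3)]) measurable
  then have int_\<phi>'_h: "integrable \<mu> (\<lambda>X. \<phi>' X * h_opt X)"
    using abs_h_opt_le by (intro integrable_mult_bounded[where B = "f\<^sup>2 / g * potential_bound"] AE_I2) auto
  note gap = ot_gap[OF measurable_\<phi>' assms(2) int_\<phi>'_h assms(4)]
  show "integrable (\<mu> \<Otimes>\<^sub>M \<sigma>) (bregman_gap \<phi>' \<psi>')"
    by (rule gap(1))
  have square: "a * (\<phi>' X - \<phi> X)\<^sup>2 = a * (\<phi>' X)\<^sup>2 + \<phi>' X * h_opt X + a * (\<phi> X)\<^sup>2" for X
    unfolding h_opt_def a_def using g_pos by (simp add: field_simps power2_eq_square)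
  have int_sum: "integrable \<mu> (\<lambda>X. a * (\<phi>' X)\<^sup>2 + \<phi>' X * h_opt X + a * (\<phi> X)\<^sup>2)"
    using assms(3) int_\<phi>'_h integrable_\<phi>_sq by simp
  then have "integrable \<mu> (\<lambda>X. a * (\<phi>' X - \<phi> X)\<^sup>2)"
    unfolding square .
  then show "integrable \<mu> (\<lambda>X. (\<phi>' X - \<phi> X)\<^sup>2)"
    using \<open>0 < a\<close> by simp
  have "a * (\<integral>X. (\<phi>' X - \<phi> X)\<^sup>2 \<partial>\<mu>) = (\<integral>X. a * (\<phi>' X)\<^sup>2 + \<phi>' X * h_opt X + a * (\<phi> X)\<^sup>2 \<partial>\<mu>)"
    unfolding square[symmetric] by simp
  also have "\<dots> = a * (\<integral>X. (\<phi>' X)\<^sup>2 \<partial>\<mu>) + (\<integral>X. \<phi>' X * h_opt X \<partial>\<mu>) + a * (\<integral>X. (\<phi> X)\<^sup>2 \<partial>\<mu>)"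
    using assms(3) int_\<phi>'_h integrable_\<phi>_sq by simp
  finally show "(\<integral>Y. \<psi>' Y \<partial>\<sigma>) - f\<^sup>2 / (2 * g) * (\<integral>X. (\<phi>' X)\<^sup>2 \<partial>\<mu>)
          - \<epsilon> * integral\<^sup>L (\<mu> \<Otimes>\<^sub>M \<sigma>) (coupling_term \<phi>' \<psi>')
        = dual_value - \<epsilon> * integral\<^sup>L (\<mu> \<Otimes>\<^sub>M \<sigma>) (bregman_gap \<phi>' \<psi>')
          - f\<^sup>2 / (2 * g) * (\<integral>X. (\<phi>' X - \<phi> X)\<^sup>2 \<partial>\<mu>)"
    using gap(2) unfolding dual_value_def a_def[symmetric] by linarith
qed

lemma dual_obj_eq_if_integrable:
  assumes "integrable \<sigma> \<psi>'" "integrable \<mu> (\<lambda>X. (\<phi>' X)\<^sup>2)"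
    and "integrable (\<mu> \<Otimes>\<^sub>M \<sigma>) (coupling_term \<phi>' \<psi>')"
  shows "dual_obj f g \<Omega> \<sigma> \<epsilon> \<phi>' \<psi>' = ereal ((\<integral>Y. \<psi>' Y \<partial>\<sigma>)
    - f\<^sup>2 / (2 * g) * (\<integral>X. (\<phi>' X)\<^sup>2 \<partial>\<mu>) - \<epsilon> * integral\<^sup>L (\<mu> \<Otimes>\<^sub>M \<sigma>) (coupling_term \<phi>' \<psi>'))"
  using assms unfolding dual_obj_def coupling_term_def[symmetric] by simp

lemma dual_obj_le:
  assumes "continuous_on \<Omega> \<phi>'"
  shows "dual_obj f g \<Omega> \<sigma> \<epsilon> \<phi>' \<psi>' \<le> ereal dual_value"
proof (cases "integrable \<sigma> \<psi>' \<and> integrable \<mu> (\<lambda>X. (\<phi>' X)\<^sup>2)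
    \<and> integrable (\<mu> \<Otimes>\<^sub>M \<sigma>) (coupling_term \<phi>' \<psi>')")
  case True
  then have ints: "integrable \<sigma> \<psi>'" "integrable \<mu> (\<lambda>X. (\<phi>' X)\<^sup>2)"
    "integrable (\<mu> \<Otimes>\<^sub>M \<sigma>) (coupling_term \<phi>' \<psi>')"
    by auto
  note gap = dual_gap[OF assms ints]
  have "0 \<le> \<epsilon> * integral\<^sup>L (\<mu> \<Otimes>\<^sub>M \<sigma>) (bregman_gap \<phi>' \<psi>')"
    using \<epsilon>_pos by (simp add: bregman_gap_nonneg)
  moreover have "0 \<le> f\<^sup>2 / (2 * g) * (\<integral>X. (\<phi>' X - \<phi> X)\<^sup>2 \<partial>\<mu>)"
    using g_pos by simp
  ultimately show ?thesis
    unfolding dual_obj_eq_if_integrable[OF ints] gap(3) by simp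
next
  case False
  then show ?thesis
    unfolding dual_obj_def coupling_term_def[symmetric] by auto
qed

lemma dual_maximizer_opt: "dual_maximizer f g \<Omega> \<sigma> \<epsilon> \<phi> \<psi>"
  unfolding dual_maximizer_def using continuous_\<phi> continuous_\<psi> dual_obj_le dual_obj_opt by simp

lemma AE_eq_\<sigma>_of_AE_eq_\<mu>_\<sigma>:
  assumes "AE z in \<mu> \<Otimes>\<^sub>M \<sigma>. u (snd z) = v (snd z)"
  shows "AE Y in \<sigma>. u Y = v Y"
proof -
  interpret pair_sigma_finite \<mu> \<sigma>
    by (rule pair_sigma_finite_\<mu>_\<sigma>)
  have "AE X in \<mu>. AE Y in \<sigma>. u Y = v Y"
    using AE_pair[OF assms] by simp
  moreover have "emeasure \<mu> (space \<mu>) \<noteq> 0"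
    using measure_\<Omega>_pos by (auto simp: measure_def)
  then have "ae_filter \<mu> \<noteq> bot"
    by (simp add: ae_filter_eq_bot_iff)
  ultimately show ?thesis
    by (simp add: eventually_const)
qed

lemma dual_maximizer_zero_gap:
  assumes "dual_maximizer f g \<Omega> \<sigma> \<epsilon> \<phi>' \<psi>'"
  shows "AE X in \<mu>. \<phi>' X = \<phi> X" and "AE z in \<mu> \<Otimes>\<^sub>M \<sigma>. bregman_gap \<phi>' \<psi>' z = 0"
proof -
  have cont: "continuous_on \<Omega> \<phi>'"
    and "dual_obj f g \<Omega> \<sigma> \<epsilon> \<phi> \<psi> \<le> dual_obj f g \<Omega> \<sigma> \<epsilon> \<phi>' \<psi>'"
    using assms continuous_\<phi> continuous_\<psi> unfolding dual_maximizer_def by blast+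
  then have ge: "ereal dual_value \<le> dual_obj f g \<Omega> \<sigma> \<epsilon> \<phi>' \<psi>'"
    by (simp add: dual_obj_opt)
  have "integrable \<sigma> \<psi>' \<and> integrable \<mu> (\<lambda>X. (\<phi>' X)\<^sup>2)
    \<and> integrable (\<mu> \<Otimes>\<^sub>M \<sigma>) (coupling_term \<phi>' \<psi>')"
  proof (rule ccontr)
    assume not_integrable: "\<not> ?thesis"
    have "dual_obj f g \<Omega> \<sigma> \<epsilon> \<phi>' \<psi>' = - \<infinity>"
      by (simp only: dual_obj_def coupling_term_def[symmetric] if_not_P[OF not_integrable])
    with ge show False
      by simp
  qed
  then have ints: "integrable \<sigma> \<psi>'" "integrable \<mu> (\<lambda>X. (\<phi>' X)\<^sup>2)"
    "integrable (\<mu> \<Otimes>\<^sub>M \<sigma>) (coupling_term \<phi>' \<psi>')"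
    by auto
  note gap = dual_gap[OF cont ints]
  define G where "G = integral\<^sup>L (\<mu> \<Otimes>\<^sub>M \<sigma>) (bregman_gap \<phi>' \<psi>')"
  define Q where "Q = (\<integral>X. (\<phi>' X - \<phi> X)\<^sup>2 \<partial>\<mu>)"
  define a where "a = f\<^sup>2 / (2 * g)"
  have "dual_value \<le> dual_value - \<epsilon> * G - a * Q"
    using ge unfolding dual_obj_eq_if_integrable[OF ints] gap(3) G_def Q_def a_def by simp
  moreover have "0 \<le> \<epsilon> * G" "0 \<le> a * Q"
    unfolding G_def Q_def a_def using \<epsilon>_pos g_pos by (simp_all add: bregman_gap_nonneg)
  ultimately have "\<epsilon> * G = 0" "a * Q = 0"
    by linarith+
  then have "G = 0" "Q = 0"
    unfolding a_def using \<epsilon>_pos f_pos g_pos by simp_all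
  have "AE X in \<mu>. (\<phi>' X - \<phi> X)\<^sup>2 = 0"
    using integral_nonneg_eq_0_iff_AE[OF gap(2)] \<open>Q = 0\<close> unfolding Q_def by simp
  then show "AE X in \<mu>. \<phi>' X = \<phi> X"
    by eventually_elim simp
  show "AE z in \<mu> \<Otimes>\<^sub>M \<sigma>. bregman_gap \<phi>' \<psi>' z = 0"
    using integral_nonneg_eq_0_iff_AE[OF gap(1)] \<open>G = 0\<close> bregman_gap_nonneg unfolding G_def by simp
qed

lemma dual_maximizer_unique:
  assumes "dual_maximizer f g \<Omega> \<sigma> \<epsilon> \<phi>' \<psi>'"
  shows "(\<forall>X\<in>\<Omega>. \<phi>' X = \<phi> X) \<and> (AE Y in \<sigma>. \<psi>' Y = \<psi> Y)"
proof -
  have "continuous_on \<Omega> \<phi>'"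
    using assms unfolding dual_maximizer_def by blast
  then have \<phi>'_eq: "\<forall>X\<in>\<Omega>. \<phi>' X = \<phi> X"
    using continuous_on_AE_eq_imp_eq[OF open_\<Omega> _ continuous_\<phi> dual_maximizer_zero_gap(1)[OF assms]]
    by blast
  have "AE z in \<mu> \<Otimes>\<^sub>M \<sigma>. fst z \<in> \<Omega>"
    by (rule AE_I2) (auto simp: space_pair_measure)
  with dual_maximizer_zero_gap(2)[OF assms] have "AE z in \<mu> \<Otimes>\<^sub>M \<sigma>. \<psi>' (snd z) = \<psi> (snd z)"
  proof eventually_elim
    case (elim z)
    then show ?case
      using bregman_gap_eq_0_imp[of \<phi>' \<psi>' "fst z" "snd z"] \<phi>'_eq by simp
  qed
  with \<phi>'_eq show ?thesis
    using AE_eq_\<sigma>_of_AE_eq_\<mu>_\<sigma> by blast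
qed

lemma nonneg_L2_h_opt: "nonneg_L2 \<Omega> h_opt"
proof -
  have "integrable \<mu> (\<lambda>X. (h_opt X)\<^sup>2)"
  proof (rule integrable_\<mu>_bounded)
    fix X
    assume "X \<in> \<Omega>"
    then show "\<bar>(h_opt X)\<^sup>2\<bar> \<le> (f\<^sup>2 / g * potential_bound)\<^sup>2"
      using power_mono[OF abs_h_opt_le abs_ge_zero, of X 2] by simp
  qed measurable
  then show ?thesis
    unfolding nonneg_L2_def using h_opt_nonneg by (auto intro: AE_I2)
qed

text \<open>The pair \<open>(\<phi>, \<psi>)\<close> is admissible for every \<open>OT\<^sub>\<epsilon>(\<sigma>, h\<mu>)\<close>, and
  \<open>\<phi> h + g/(2f\<^sup>2) h\<^sup>2\<close> is minimised pointwise at \<open>h = h_opt\<close> by completing the square.\<close>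

lemma entropic_OT_quadratic_le:
  assumes "nonneg_L2 \<Omega> h"
  shows "entropic_OT \<epsilon> \<Omega> \<sigma> h_opt + ereal (g / (2 * f\<^sup>2) * (\<integral>X. (h_opt X)\<^sup>2 \<partial>\<mu>))
    \<le> entropic_OT \<epsilon> \<Omega> \<sigma> h + ereal (g / (2 * f\<^sup>2) * (\<integral>X. (h X)\<^sup>2 \<partial>\<mu>))"
proof -
  define c where "c = g / (2 * f\<^sup>2)"
  have [measurable]: "h \<in> borel_measurable \<mu>" and int_h_sq: "integrable \<mu> (\<lambda>X. (h X)\<^sup>2)"
    using assms unfolding nonneg_L2_def by simp_all
  have "integrable \<mu> h"
    by (rule finite_measure.square_integrable_imp_integrable[OF finite_\<mu> _ int_h_sq]) measurable
  then have "integrable \<mu> (\<lambda>X. h X * \<phi> X)"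
    using measurable_\<phi> by (rule integrable_mult_bounded[where B = potential_bound]) (rule AE_I2, simp add: abs_\<phi>_le)
  then have int_\<phi>_h: "integrable \<mu> (\<lambda>X. \<phi> X * h X)"
    by (simp add: mult.commute)
  have int_h_opt_sq: "integrable \<mu> (\<lambda>X. (h_opt X)\<^sup>2)"
    using nonneg_L2_h_opt unfolding nonneg_L2_def by simp
  define W where "W = (\<integral>Y. \<psi> Y \<partial>\<sigma>) + (\<integral>X. \<phi> X * h X \<partial>\<mu>)
    - \<epsilon> * integral\<^sup>L (\<mu> \<Otimes>\<^sub>M \<sigma>) (coupling_term \<phi> \<psi>)"
  have "ot_obj \<epsilon> \<Omega> \<sigma> h \<phi> \<psi> \<le> entropic_OT \<epsilon> \<Omega> \<sigma> h"
    by (rule ot_obj_le_entropic_OT[OF continuous_\<phi> continuous_\<psi>])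
  then have W_le: "ereal W \<le> entropic_OT \<epsilon> \<Omega> \<sigma> h"
    unfolding W_def ot_obj_eq_if_integrable[OF integrable_\<psi> int_\<phi>_h integrable_coupling_term_opt] .
  have pointwise: "\<phi> X * h_opt X + c * (h_opt X)\<^sup>2 \<le> \<phi> X * h X + c * (h X)\<^sup>2" for X
  proof -
    have "\<phi> X * h X + c * (h X)\<^sup>2 - (\<phi> X * h_opt X + c * (h_opt X)\<^sup>2) = c * (h X - h_opt X)\<^sup>2"
      unfolding h_opt_def c_def using f_pos g_pos by (simp add: field_simps power2_eq_square)
    moreover have "0 \<le> c * (h X - h_opt X)\<^sup>2"
      unfolding c_def using g_pos by simp
    ultimately show ?thesis
      by linarith
  qed
  have "integrable \<mu> (\<lambda>X. \<phi> X * h_opt X + c * (h_opt X)\<^sup>2)"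
    using integrable_\<phi>_h_opt int_h_opt_sq by (intro Bochner_Integration.integrable_add integrable_mult_right)
  moreover have "integrable \<mu> (\<lambda>X. \<phi> X * h X + c * (h X)\<^sup>2)"
    using int_\<phi>_h int_h_sq by (intro Bochner_Integration.integrable_add integrable_mult_right)
  ultimately have "(\<integral>X. \<phi> X * h_opt X + c * (h_opt X)\<^sup>2 \<partial>\<mu>) \<le> (\<integral>X. \<phi> X * h X + c * (h X)\<^sup>2 \<partial>\<mu>)"
    by (rule integral_mono) (rule pointwise)
  then have "ot_value + c * (\<integral>X. (h_opt X)\<^sup>2 \<partial>\<mu>) \<le> W + c * (\<integral>X. (h X)\<^sup>2 \<partial>\<mu>)"
    unfolding ot_value_def W_def using integrable_\<phi>_h_opt int_h_opt_sq int_\<phi>_h int_h_sq by simp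
  then have "entropic_OT \<epsilon> \<Omega> \<sigma> h_opt + ereal (c * (\<integral>X. (h_opt X)\<^sup>2 \<partial>\<mu>))
      \<le> ereal W + ereal (c * (\<integral>X. (h X)\<^sup>2 \<partial>\<mu>))"
    unfolding entropic_OT_h_opt by simp
  also have "\<dots> \<le> entropic_OT \<epsilon> \<Omega> \<sigma> h + ereal (c * (\<integral>X. (h X)\<^sup>2 \<partial>\<mu>))"
    using W_le by (rule add_right_mono)
  finally show ?thesis
    unfolding c_def .
qed

lemma has_derivative_\<psi>:
  "(\<psi> has_derivative (\<lambda>v. (Y - (\<integral>X. plan X Y *\<^sub>R X \<partial>\<mu>)) \<bullet> v)) (at Y)"
proof -
  define F where "F = mu_conv \<phi> Y"
  define w where "w X = exp (\<phi> X / \<epsilon>) * gauss_kernel \<epsilon> X Y" for X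
  have "0 < F"
    unfolding F_def by (rule mu_conv_pos[OF bounded_\<phi>])
  have int_w: "integrable \<mu> w"
    unfolding w_def by (rule integrable_mu_conv[OF bounded_\<phi>])
  have int_wX: "integrable \<mu> (\<lambda>X. w X *\<^sub>R X)"
    unfolding w_def by (rule integrable_mu_conv_scaleR[OF bounded_\<phi>])
  define I where "I = (\<integral>X. w X *\<^sub>R X \<partial>\<mu>)"
  have "(\<integral>X. (exp (\<phi> X / \<epsilon>) * gauss_kernel \<epsilon> X Y / \<epsilon>) *\<^sub>R (X - Y) \<partial>\<mu>)
      = (\<integral>X. (1 / \<epsilon>) *\<^sub>R (w X *\<^sub>R X - w X *\<^sub>R Y) \<partial>\<mu>)"
    unfolding w_def by (intro Bochner_Integration.integral_cong) (auto simp: scaleR_diff_right)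
  also have "\<dots> = (1 / \<epsilon>) *\<^sub>R (I - F *\<^sub>R Y)"
    unfolding I_def F_def mu_conv_def w_def[symmetric]
    using int_wX int_w by (simp add: integral_scaleR_left)
  finally have grad_mu_conv: "(\<integral>X. (exp (\<phi> X / \<epsilon>) * gauss_kernel \<epsilon> X Y / \<epsilon>) *\<^sub>R (X - Y) \<partial>\<mu>)
      = (1 / \<epsilon>) *\<^sub>R (I - F *\<^sub>R Y)" .
  have "(\<integral>X. plan X Y *\<^sub>R X \<partial>\<mu>) = (\<integral>X. exp (\<psi> Y / \<epsilon>) *\<^sub>R (w X *\<^sub>R X) \<partial>\<mu>)"
    unfolding plan_eq_\<mu> w_def by simp
  also have "\<dots> = exp (\<psi> Y / \<epsilon>) *\<^sub>R I"
    unfolding I_def by (rule integral_scaleR_right)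
  also have "exp (\<psi> Y / \<epsilon>) = 1 / F"
    unfolding F_def \<psi>_def by (rule exp_psi_transform[OF bounded_\<phi>])
  finally have barycenter: "(\<integral>X. plan X Y *\<^sub>R X \<partial>\<mu>) = (1 / F) *\<^sub>R I" .
  have "(\<lambda>v. ((\<integral>X. (exp (\<phi> X / \<epsilon>) * gauss_kernel \<epsilon> X Y / \<epsilon>) *\<^sub>R (X - Y) \<partial>\<mu>) \<bullet> v)
      * inverse (mu_conv \<phi> Y) * (- \<epsilon>)) = (\<lambda>v. (Y - (\<integral>X. plan X Y *\<^sub>R X \<partial>\<mu>)) \<bullet> v)"
  proof
    fix v
    show "((\<integral>X. (exp (\<phi> X / \<epsilon>) * gauss_kernel \<epsilon> X Y / \<epsilon>) *\<^sub>R (X - Y) \<partial>\<mu>) \<bullet> v)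
        * inverse (mu_conv \<phi> Y) * (- \<epsilon>) = (Y - (\<integral>X. plan X Y *\<^sub>R X \<partial>\<mu>)) \<bullet> v"
      unfolding grad_mu_conv barycenter F_def[symmetric] using \<open>0 < F\<close> \<epsilon>_pos
      by (simp add: inner_diff_left field_simps)
  qed
  then show ?thesis
    using has_derivative_psi_transform[OF bounded_\<phi>, of Y] unfolding \<psi>_def by simp
qed

end

theorem proposition3:
  fixes f g \<epsilon> :: real and \<Omega> :: "(real^2) set" and \<sigma> :: "(real^2) measure"
  assumes "f > 0" and "g > 0" and "\<epsilon> > 0"
    and "open \<Omega>" and "connected \<Omega>" and "convex \<Omega>" and "bounded \<Omega>" and "\<Omega> \<noteq> {}"
    and "sets \<sigma> = sets borel" and "finite_measure \<sigma>"
    and "\<exists>C. compact C \<and> emeasure \<sigma> (UNIV - C) = 0"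
  shows "\<exists>\<phi> \<psi>. dual_maximizer f g \<Omega> \<sigma> \<epsilon> \<phi> \<psi>
     \<and> (\<forall>\<phi>' \<psi>'. dual_maximizer f g \<Omega> \<sigma> \<epsilon> \<phi>' \<psi>' \<longrightarrow>
           (\<forall>X\<in>\<Omega>. \<phi>' X = \<phi> X) \<and> (AE Y in \<sigma>. \<psi>' Y = \<psi> Y))
     \<and> (\<forall>Y. \<psi> Y = - \<epsilon> * ln (\<integral>X. exp (\<phi> X / \<epsilon>) * gauss_kernel \<epsilon> X Y \<partial>lebesgue_on \<Omega>))
     \<and> (\<forall>X\<in>\<Omega>. \<phi> X = - \<epsilon> * lambert_W0 (g / (\<epsilon> * f\<^sup>2) *
             (\<integral>Y. exp (\<psi> Y / \<epsilon>) * gauss_kernel \<epsilon> X Y \<partial>\<sigma>)))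
     \<and> (let h = (\<lambda>X. - (f\<^sup>2 / g) * \<phi> X) in
          entropic_OT \<epsilon> \<Omega> \<sigma> h = ot_obj \<epsilon> \<Omega> \<sigma> h \<phi> \<psi>
          \<and> nonneg_L2 \<Omega> h
          \<and> (\<forall>h'. nonneg_L2 \<Omega> h' \<longrightarrow>
               entropic_OT \<epsilon> \<Omega> \<sigma> h + ereal (g / (2 * f\<^sup>2) * (\<integral>X. (h X)\<^sup>2 \<partial>lebesgue_on \<Omega>))
               \<le> entropic_OT \<epsilon> \<Omega> \<sigma> h' + ereal (g / (2 * f\<^sup>2) * (\<integral>X. (h' X)\<^sup>2 \<partial>lebesgue_on \<Omega>))))
     \<and> (\<forall>Y. (\<psi> has_derivative
             (\<lambda>v. (Y - (\<integral>X. (exp ((\<phi> X + \<psi> Y) / \<epsilon>) * gauss_kernel \<epsilon> X Y) *\<^sub>R X \<partial>lebesgue_on \<Omega>)) \<bullet> v))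
           (at Y))"
proof -
  obtain C where "compact C" "emeasure \<sigma> (UNIV - C) = 0"
    using assms(11) by blast
  then obtain R where R: "\<Omega> \<subseteq> cball 0 R" "AE Y in \<sigma>. norm Y \<le> R"
    using AE_norm_le_of_compact_support[OF assms(9) _ _ assms(7)] by blast
  interpret gaussian_entropic_dual f g \<epsilon> \<Omega> \<sigma> R
    by (rule gaussian_entropic_dual.intro) (use assms R in auto)
  obtain \<phi> where "continuous_on UNIV \<phi>" "bounded_potential potential_bound \<phi>"
    "\<forall>X. sinkhorn_map \<phi> X = \<phi> X"
    using sinkhorn_fixed_point_exists by blast
  then interpret opt: gaussian_entropic_dual_optimum f g \<epsilon> \<Omega> \<sigma> R \<phi>
    by (intro gaussian_entropic_dual_optimum.intro gaussian_entropic_dual_axioms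
        gaussian_entropic_dual_optimum_axioms.intro) (auto intro: continuous_on_subset)
  have h_opt: "(\<lambda>X. - (f\<^sup>2 / g) * \<phi> X) = opt.h_opt"
    unfolding opt.h_opt_def ..
  have \<psi>_eq: "\<forall>Y. opt.\<psi> Y = - \<epsilon> * ln (\<integral>X. exp (\<phi> X / \<epsilon>) * gauss_kernel \<epsilon> X Y \<partial>lebesgue_on \<Omega>)"
    unfolding opt.\<psi>_def psi_transform_def mu_conv_def by simp
  have \<phi>_eq: "\<forall>X\<in>\<Omega>. \<phi> X = - \<epsilon> * lambert_W0 (g / (\<epsilon> * f\<^sup>2) *
      (\<integral>Y. exp (opt.\<psi> Y / \<epsilon>) * gauss_kernel \<epsilon> X Y \<partial>\<sigma>))"
    using opt.\<phi>_eq_phi_transform unfolding phi_transform_def sigma_conv_def \<kappa>_def by blast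
  have transport: "let h = (\<lambda>X. - (f\<^sup>2 / g) * \<phi> X) in
      entropic_OT \<epsilon> \<Omega> \<sigma> h = ot_obj \<epsilon> \<Omega> \<sigma> h \<phi> opt.\<psi> \<and> nonneg_L2 \<Omega> h
      \<and> (\<forall>h'. nonneg_L2 \<Omega> h' \<longrightarrow>
           entropic_OT \<epsilon> \<Omega> \<sigma> h + ereal (g / (2 * f\<^sup>2) * (\<integral>X. (h X)\<^sup>2 \<partial>lebesgue_on \<Omega>))
           \<le> entropic_OT \<epsilon> \<Omega> \<sigma> h' + ereal (g / (2 * f\<^sup>2) * (\<integral>X. (h' X)\<^sup>2 \<partial>lebesgue_on \<Omega>)))"
    unfolding Let_def h_opt
    using opt.entropic_OT_h_opt opt.ot_obj_opt opt.nonneg_L2_h_opt opt.entropic_OT_quadratic_le by simp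
  have gradient: "\<forall>Y. (opt.\<psi> has_derivative (\<lambda>v. (Y - (\<integral>X. (exp ((\<phi> X + opt.\<psi> Y) / \<epsilon>)
      * gauss_kernel \<epsilon> X Y) *\<^sub>R X \<partial>lebesgue_on \<Omega>)) \<bullet> v)) (at Y)"
    using opt.has_derivative_\<psi> unfolding opt.plan_def by blast
  show ?thesis
    using opt.dual_maximizer_opt opt.dual_maximizer_unique \<psi>_eq \<phi>_eq transport gradient
    by (intro exI[of _ \<phi>] exI[of _ opt.\<psi>] conjI) blast+
qed

end
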